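(* Let $f:S^1\to S^1$, $f(z)=2z\pmod 1$, let $\tau:S^1\to\mathbb{R}$ be $C^\infty$, and couple $\nu=1/\hbar$. Fix $(x,\xi)\in S^1\times\mathbb{R}$. Then, as $\hbar=1/\nu\to 0$, the family $\phi_\hbar(z)=\hat F_\nu(\varphi_{x,\xi})(z)=\varphi_{x,\xi}(f(z))\,e^{i\tau(z)/\hbar}$ has micro-support contained in $\{G_1(x,\xi),G_2(x,\xi)\}\subset S^1\times\mathbb{R}$, where $G_1,G_2$ are the two inverse branches of $F(z,s)=\big(f(z),\tfrac12 s-\tfrac12\tau'(z)\big)$, namely $G_j(x,\xi)=(y_j,\,2\xi+\tau'(y_j))$ with $y_1=\tfrac{x}{2}$, $y_2=\tfrac{x}{2}+\tfrac12$. Equivalently: if $f(y)\neq x$, or $f(y)=x$ and $\eta\neq 2\xi+\tau'(y)$, then $(y,\eta)$ is not in the micro-support.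
   Context: $S^1=\mathbb{R}/\mathbb{Z}$ is identified with $[0,1)$; $\hbar>0$ is a small parameter. For $(x,\xi)\in\mathbb{R}^2$ the periodic Gaussian wavepacket is $\varphi_{x,\xi}(z)=\sum_{k\in\mathbb{Z}}e^{\frac{i\xi(z-k)}{\hbar}}e^{-\frac{(z-k-x)^2}{4\hbar}}$. Inner product: $\langle u,v\rangle=\int_0^1\overline{u(z)}\,v(z)\,dz$. A quantity $q(\hbar)$ is $O(\hbar^\infty)$ if for every $N>0$ there are $C_N,\delta>0$ with $|q(\hbar)|\le C_N\hbar^N$ for $0<\hbar\le\delta$. A family $\phi_\hbar\in L^2(S^1)$ is micro-locally small near $(x_0,\xi_0)\in S^1\times\mathbb{R}$ if $|\langle\varphi_{y,\eta},\phi_\hbar\rangle|$ is $O(\hbar^\infty)$ uniformly for $(y,\eta)$ in a neighbourhood of $(x_0,\xi_0)$; the micro-support of $\phi_\hbar$ is the set of points near which it is not micro-locally small. The operator $\hat F_\nu$ is $\hat F_\nu(\varphi)(z)=\varphi(f(z))\,e^{i\nu\tau(z)}$. *)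

theory Defs
  imports "HOL-Analysis.Analysis"
begin

text \<open>Periodic Gaussian wavepacket on S^1 = R/Z (points represented by reals,
  functions on S^1 by 1-periodic functions on R).\<close>
definition wavepacket :: "real \<Rightarrow> real \<Rightarrow> real \<Rightarrow> real \<Rightarrow> complex" where
  "wavepacket h x \<xi> z =
     (\<Sum>\<^sub>\<infinity>k::int. exp (\<i> * complex_of_real (\<xi> * (z - of_int k) / h))
                    * complex_of_real (exp (- ((z - of_int k - x)\<^sup>2) / (4 * h))))"

definition l2_inner :: "(real \<Rightarrow> complex) \<Rightarrow> (real \<Rightarrow> complex) \<Rightarrow> complex" where
  "l2_inner u v = integral {0..1} (\<lambda>z. cnj (u z) * v z)"

definition microlocally_small :: "(real \<Rightarrow> real \<Rightarrow> complex) \<Rightarrow> real \<Rightarrow> real \<Rightarrow> bool" where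
  "microlocally_small \<phi> x0 \<xi>0 \<longleftrightarrow>
     (\<exists>e>0. \<forall>N>0. \<exists>C \<delta>. \<delta> > 0 \<and>
        (\<forall>h y \<eta>. 0 < h \<and> h \<le> \<delta> \<and> dist (y, \<eta>) (x0, \<xi>0) < e \<longrightarrow>
           norm (l2_inner (wavepacket h y \<eta>) (\<phi> h)) \<le> C * h powr N))"

definition microsupport :: "(real \<Rightarrow> real \<Rightarrow> complex) \<Rightarrow> (real \<times> real) set" where
  "microsupport \<phi> = {(x0, \<xi>0). x0 \<in> {0..<1} \<and> \<not> microlocally_small \<phi> x0 \<xi>0}"

definition doubling :: "real \<Rightarrow> real" where
  "doubling z = frac (2 * z)"

definition Fhat :: "(real \<Rightarrow> real) \<Rightarrow> real \<Rightarrow> (real \<Rightarrow> complex) \<Rightarrow> real \<Rightarrow> complex" where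
  "Fhat \<tau> \<nu> \<phi> z = \<phi> (doubling z) * exp (\<i> * complex_of_real (\<nu> * \<tau> z))"

definition smooth_fun :: "(real \<Rightarrow> real) \<Rightarrow> bool" where
  "smooth_fun \<tau> \<longleftrightarrow> (\<forall>n z. ((deriv ^^ n) \<tau>) differentiable (at z))"

end

theory Submission
  imports Defs
begin

text \<open>Move the period window to \<open>[y\<^sub>0 - 1/2, y\<^sub>0 + 1/2]\<close>. There, all lattice terms of the two
  wavepackets except the term \<open>k = 0\<close> of \<open>\<phi>\<^sub>y\<^sub>,\<^sub>\<eta>\<close> and five terms \<open>m\<close> of \<open>\<phi>\<^sub>x\<^sub>,\<^sub>\<xi>(2z)\<close> are
  \<open>O(exp(-c/h))\<close>, so up to \<open>O(h\<^sup>\<infinity>)\<close> the inner product \<open>\<langle>\<phi>\<^sub>y\<^sub>,\<^sub>\<eta>, F\<^sub>\<nu>\<phi>\<^sub>x\<^sub>,\<^sub>\<xi>\<rangle>\<close> is a finite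
  sum of integrals \<open>\<integral> exp(\<Psi>\<^sub>m(z)/h) dz\<close> with \<open>Re \<Psi>\<^sub>m(z) = -((z - y)\<^sup>2 + (2z - m - x)\<^sup>2)/4\<close> and
  \<open>Im \<Psi>\<^sub>m'(z) = 2\<xi> + \<tau>'(z) - \<eta>\<close>. If \<open>2y\<^sub>0 \<noteq> x + m\<close>, then \<open>Re \<Psi>\<^sub>m\<close> is bounded away from \<open>0\<close>
  for \<open>y\<close> near \<open>y\<^sub>0\<close> and the integral is exponentially small. If \<open>2y\<^sub>0 = x + m\<close> but
  \<open>\<eta>\<^sub>0 \<noteq> 2\<xi> + \<tau>'(y\<^sub>0)\<close>, then \<open>\<Psi>\<^sub>m'\<close> has no zero (its imaginary part is large near \<open>y\<^sub>0\<close>, its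
  real part away from \<open>y\<^sub>0\<close>), and \<open>N\<close> integrations by parts, each gaining a factor \<open>h\<close>, give
  \<open>O(h\<^sup>N)\<close>; the boundary terms are exponentially small since \<open>Re \<Psi>\<^sub>m < 0\<close> at the window ends.\<close>

section \<open>Families of functions with uniformly bounded derivatives\<close>

definition bounded_continuous_family :: "'p set \<Rightarrow> real set \<Rightarrow> ('p \<Rightarrow> real \<Rightarrow> complex) \<Rightarrow> bool" where
  "bounded_continuous_family P W u \<longleftrightarrow>
     (\<exists>B. \<forall>p\<in>P. \<forall>z\<in>W. norm (u p z) \<le> B) \<and> (\<forall>p\<in>P. continuous_on W (u p))"

fun bounded_Cn_family :: "nat \<Rightarrow> 'p set \<Rightarrow> real set \<Rightarrow> ('p \<Rightarrow> real \<Rightarrow> complex) \<Rightarrow> bool" where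
  "bounded_Cn_family 0 P W u \<longleftrightarrow> bounded_continuous_family P W u"
| "bounded_Cn_family (Suc n) P W u \<longleftrightarrow> bounded_continuous_family P W u \<and>
     (\<exists>u'. (\<forall>p\<in>P. \<forall>z\<in>W. (u p has_vector_derivative u' p z) (at z within W))
           \<and> bounded_Cn_family n P W u')"

lemma bounded_Cn_family_imp_bounded_continuous:
  "bounded_Cn_family n P W u \<Longrightarrow> bounded_continuous_family P W u"
  by (cases n) auto

lemma bounded_Cn_family_Suc_imp: "bounded_Cn_family (Suc n) P W u \<Longrightarrow> bounded_Cn_family n P W u"
proof (induction n arbitrary: u)
  case (Suc n)
  then show ?case by (metis bounded_Cn_family.simps(2))
qed auto

lemma bounded_Cn_family_cong:
  assumes "bounded_Cn_family n P W u" and eq: "\<And>p z. p \<in> P \<Longrightarrow> z \<in> W \<Longrightarrow> u p z = v p z"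
  shows "bounded_Cn_family n P W v"
proof -
  obtain B where "\<forall>p\<in>P. \<forall>z\<in>W. norm (u p z) \<le> B" "\<forall>p\<in>P. continuous_on W (u p)"
    using bounded_Cn_family_imp_bounded_continuous[OF assms(1)]
    unfolding bounded_continuous_family_def by blast
  then have "\<forall>p\<in>P. \<forall>z\<in>W. norm (v p z) \<le> B" "\<forall>p\<in>P. continuous_on W (v p)"
    using eq continuous_on_cong[of W W "u p" "v p" for p] by simp_all
  then have bc: "bounded_continuous_family P W v"
    unfolding bounded_continuous_family_def by blast
  show ?thesis
  proof (cases n)
    case 0
    with bc show ?thesis by simp
  next
    case (Suc m)
    with assms(1) obtain u' where
      du: "\<forall>p\<in>P. \<forall>z\<in>W. (u p has_vector_derivative u' p z) (at z within W)"
      and u': "bounded_Cn_family m P W u'"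
      by auto
    have "(v p has_vector_derivative u' p z) (at z within W)" if "p \<in> P" "z \<in> W" for p z
      using has_vector_derivative_transform[OF that(2), of "v p" "u p"] eq[OF that(1)] du that
      by simp
    with u' bc show ?thesis
      unfolding Suc bounded_Cn_family.simps by blast
  qed
qed

lemma bounded_continuous_family_add:
  assumes "bounded_continuous_family P W u" "bounded_continuous_family P W v"
  shows "bounded_continuous_family P W (\<lambda>p z. u p z + v p z)"
proof -
  obtain B1 B2 where "\<forall>p\<in>P. \<forall>z\<in>W. norm (u p z) \<le> B1" "\<forall>p\<in>P. \<forall>z\<in>W. norm (v p z) \<le> B2"
    using assms unfolding bounded_continuous_family_def by blast
  then have "\<forall>p\<in>P. \<forall>z\<in>W. norm (u p z + v p z) \<le> B1 + B2"
    by (smt (verit) norm_triangle_ineq)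
  then show ?thesis
    using assms unfolding bounded_continuous_family_def by (auto intro: continuous_on_add)
qed

lemma bounded_continuous_family_mult:
  assumes "bounded_continuous_family P W u" "bounded_continuous_family P W v"
  shows "bounded_continuous_family P W (\<lambda>p z. u p z * v p z)"
proof -
  obtain B1 B2 where "\<forall>p\<in>P. \<forall>z\<in>W. norm (u p z) \<le> B1" "\<forall>p\<in>P. \<forall>z\<in>W. norm (v p z) \<le> B2"
    using assms unfolding bounded_continuous_family_def by blast
  then have "\<forall>p\<in>P. \<forall>z\<in>W. norm (u p z * v p z) \<le> B1 * B2"
    by (simp add: norm_mult mult_mono' order_trans[OF norm_ge_zero])
  then show ?thesis
    using assms unfolding bounded_continuous_family_def by (auto intro: continuous_on_mult)
qed

lemma bounded_continuous_family_inverse: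
  assumes "bounded_continuous_family P W g"
    and "c > 0" "\<And>p z. p \<in> P \<Longrightarrow> z \<in> W \<Longrightarrow> c \<le> norm (g p z)"
  shows "bounded_continuous_family P W (\<lambda>p z. inverse (g p z))"
proof -
  have "norm (inverse (g p z)) \<le> inverse c" if "p \<in> P" "z \<in> W" for p z
    using assms(2) assms(3)[OF that] by (simp add: norm_inverse le_imp_inverse_le)
  moreover have "continuous_on W (\<lambda>z. inverse (g p z))" if "p \<in> P" for p
    using assms that unfolding bounded_continuous_family_def
    by (intro continuous_on_inverse) (auto, metis norm_zero not_le)
  ultimately show ?thesis
    unfolding bounded_continuous_family_def by blast
qed

lemma bounded_Cn_family_add:
  "bounded_Cn_family n P W u \<Longrightarrow> bounded_Cn_family n P W v \<Longrightarrow>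
     bounded_Cn_family n P W (\<lambda>p z. u p z + v p z)"
proof (induction n arbitrary: u v)
  case 0
  then show ?case by (simp add: bounded_continuous_family_add)
next
  case (Suc n)
  then obtain u' v' where
    u': "\<forall>p\<in>P. \<forall>z\<in>W. (u p has_vector_derivative u' p z) (at z within W)" "bounded_Cn_family n P W u'"
    and v': "\<forall>p\<in>P. \<forall>z\<in>W. (v p has_vector_derivative v' p z) (at z within W)" "bounded_Cn_family n P W v'"
    by auto
  have "\<forall>p\<in>P. \<forall>z\<in>W. ((\<lambda>z. u p z + v p z) has_vector_derivative u' p z + v' p z) (at z within W)"
    using u'(1) v'(1) by (auto intro!: derivative_intros)
  moreover have "bounded_Cn_family n P W (\<lambda>p z. u' p z + v' p z)"
    using Suc.IH u'(2) v'(2) .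
  ultimately show ?case
    using Suc.prems by (auto intro!: bounded_continuous_family_add exI[of _ "\<lambda>p z. u' p z + v' p z"])
qed

lemma bounded_Cn_family_mult:
  "bounded_Cn_family n P W u \<Longrightarrow> bounded_Cn_family n P W v \<Longrightarrow>
     bounded_Cn_family n P W (\<lambda>p z. u p z * v p z)"
proof (induction n arbitrary: u v)
  case 0
  then show ?case by (simp add: bounded_continuous_family_mult)
next
  case (Suc n)
  then obtain u' v' where
    u': "\<forall>p\<in>P. \<forall>z\<in>W. (u p has_vector_derivative u' p z) (at z within W)" "bounded_Cn_family n P W u'"
    and v': "\<forall>p\<in>P. \<forall>z\<in>W. (v p has_vector_derivative v' p z) (at z within W)" "bounded_Cn_family n P W v'"
    by auto
  have "\<forall>p\<in>P. \<forall>z\<in>W. ((\<lambda>z. u p z * v p z) has_vector_derivative u p z * v' p z + u' p z * v p z)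
          (at z within W)"
    using u'(1) v'(1) by (auto intro!: derivative_intros)
  moreover have "bounded_Cn_family n P W (\<lambda>p z. u p z * v' p z + u' p z * v p z)"
    using Suc.IH u'(2) v'(2) Suc.prems[THEN bounded_Cn_family_Suc_imp]
    by (intro bounded_Cn_family_add)
  ultimately show ?case
    using Suc.prems
    by (auto intro!: bounded_continuous_family_mult exI[of _ "\<lambda>p z. u p z * v' p z + u' p z * v p z"])
qed

lemma bounded_Cn_family_const:
  assumes "bounded (k ` P)"
  shows "bounded_Cn_family n P W (\<lambda>p z. k p)"
  using assms
proof (induction n arbitrary: k)
  case 0
  then show ?case
    by (auto simp: bounded_continuous_family_def bounded_iff)
next
  case (Suc n)
  have "bounded_Cn_family n P W (\<lambda>p z. 0)"
    by (rule Suc.IH) (rule bounded_subset[of "{0}"], auto)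
  with Suc.prems show ?case
    by (auto simp: bounded_continuous_family_def bounded_iff intro!: exI[of _ "\<lambda>p z. 0"])
qed

lemma bounded_Cn_family_inverse:
  assumes "c > 0" "\<And>p z. p \<in> P \<Longrightarrow> z \<in> W \<Longrightarrow> c \<le> norm (g p z)"
  shows "bounded_Cn_family n P W g \<Longrightarrow> bounded_Cn_family n P W (\<lambda>p z. inverse (g p z))"
proof (induction n)
  case 0
  then show ?case using bounded_continuous_family_inverse[OF _ assms] by simp
next
  case (Suc n)
  then obtain g' where
    g': "\<forall>p\<in>P. \<forall>z\<in>W. (g p has_vector_derivative g' p z) (at z within W)" "bounded_Cn_family n P W g'"
    by auto
  define dinv where "dinv p z = g' p z * ((- 1) * (inverse (g p z) * inverse (g p z)))" for p z
  have dinv: "((\<lambda>z. inverse (g p z)) has_vector_derivative dinv p z) (at z within W)"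
    if "p \<in> P" "z \<in> W" for p z
  proof -
    have "g p z \<noteq> 0"
      using assms that by (metis norm_zero not_le)
    from field_vector_diff_chain_within[OF g'(1)[rule_format, OF that] DERIV_inverse[OF this]]
    show ?thesis by (simp add: o_def power2_eq_square dinv_def)
  qed
  have "bounded_Cn_family n P W (\<lambda>p z. inverse (g p z))"
    using Suc.IH Suc.prems[THEN bounded_Cn_family_Suc_imp] .
  moreover have "bounded ((\<lambda>p. - 1 :: complex) ` P)"
    by (rule bounded_subset[of "{- 1}"]) auto
  ultimately have "bounded_Cn_family n P W dinv"
    unfolding dinv_def by (intro bounded_Cn_family_mult g'(2) bounded_Cn_family_const)
  then show ?case
    using dinv Suc.prems bounded_continuous_family_inverse[OF _ assms]
    by (auto intro!: exI[of _ dinv])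
qed

lemma bounded_Cn_family_of_real_derivs:
  fixes f :: "nat \<Rightarrow> real \<Rightarrow> real"
  assumes "\<And>k z. (f k has_real_derivative f (Suc k) z) (at z)"
  shows "bounded_Cn_family n P {a..b} (\<lambda>p z. complex_of_real (f k z))"
proof (induction n arbitrary: k)
  have bc: "bounded_continuous_family P {a..b} (\<lambda>p z. complex_of_real (f k z))" for k
  proof -
    have "continuous_on {a..b} (f k)"
      using assms DERIV_isCont continuous_at_imp_continuous_on by blast
    then have "continuous_on {a..b} (\<lambda>z. complex_of_real (f k z))"
      by (intro continuous_intros)
    moreover from this have "bounded ((\<lambda>z. complex_of_real (f k z)) ` {a..b})"
      by (intro compact_imp_bounded compact_continuous_image) auto
    ultimately show ?thesis
      unfolding bounded_continuous_family_def bounded_iff by blast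
  qed
  {
    case 0
    show ?case using bc by simp
  next
    case (Suc n)
    have "((\<lambda>z. complex_of_real (f k z)) has_vector_derivative complex_of_real (f (Suc k) z))
            (at z within {a..b})" for z
      using assms has_field_derivative_at_within has_vector_derivative_of_real by blast
    then show ?case
      using bc Suc.IH by (auto intro!: exI[of _ "\<lambda>p z. complex_of_real (f (Suc k) z)"])
  }
qed

lemma smooth_fun_higher_deriv:
  assumes "smooth_fun \<tau>"
  shows "((deriv ^^ n) \<tau> has_real_derivative (deriv ^^ Suc n) \<tau> z) (at z)"
  using assms unfolding smooth_fun_def by (simp add: DERIV_deriv_iff_real_differentiable)

lemma bounded_Cn_family_smooth:
  "smooth_fun \<tau> \<Longrightarrow> bounded_Cn_family n P {a..b} (\<lambda>p z. complex_of_real ((deriv ^^ k) \<tau> z))"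
  by (rule bounded_Cn_family_of_real_derivs[of "\<lambda>k. (deriv ^^ k) \<tau>"]) (rule smooth_fun_higher_deriv)

lemma bounded_Cn_family_of_real_id: "bounded_Cn_family n P {a..b} (\<lambda>p z. complex_of_real z)"
proof -
  define f :: "nat \<Rightarrow> real \<Rightarrow> real" where "f k z = (if k = 0 then z else if k = 1 then 1 else 0)" for k z
  have "(f k has_real_derivative f (Suc k) z) (at z)" for k z
    unfolding f_def by (cases "k = 0") (auto intro!: derivative_eq_intros)
  from bounded_Cn_family_of_real_derivs[of f, OF this, of n P a b 0]
  show ?thesis by (simp add: f_def)
qed

section \<open>Integration by parts against an oscillating exponential\<close>

lemma exp_neg_div_le_power:
  fixes c :: real
  assumes "c > 0"
  shows "\<exists>C. \<forall>h>0. exp (- c / h) \<le> C * h ^ N"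
proof (intro exI[of _ "fact N / c ^ N"] allI impI)
  fix h :: real
  assume h: "h > 0"
  have "(c / h) ^ N / fact N \<le> exp (c / h)"
  proof -
    have "(\<Sum>n\<in>{N}. (c / h) ^ n /\<^sub>R fact n) \<le> (\<Sum>n. (c / h) ^ n /\<^sub>R fact n)"
      using assms h by (intro sum_le_suminf summable_exp_generic) auto
    then show ?thesis by (simp add: exp_def divide_inverse_commute)
  qed
  then have "c ^ N \<le> exp (c / h) * (h ^ N * fact N)"
    using h by (simp add: power_divide divide_le_eq)
  then have "exp (- c / h) * c ^ N \<le> h ^ N * fact N"
    by (simp add: exp_minus field_simps)
  then show "exp (- c / h) \<le> fact N / c ^ N * h ^ N"
    using assms by (simp add: field_simps)
qed

lemma has_vector_derivative_exp_div:
  fixes \<Psi> :: "real \<Rightarrow> complex"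
  assumes "(\<Psi> has_vector_derivative \<Psi>') (at z within S)"
  shows "((\<lambda>z. exp (\<Psi> z / of_real h)) has_vector_derivative \<Psi>' / of_real h * exp (\<Psi> z / of_real h))
           (at z within S)"
  using field_vector_diff_chain_within[OF has_vector_derivative_divide[OF assms], of exp]
  by (simp add: o_def DERIV_exp has_field_derivative_at_within)

lemma has_integral_exp_phase_by_parts:
  fixes v v' \<Psi> \<Psi>' :: "real \<Rightarrow> complex" and h :: real
  assumes "a \<le> b" "h \<noteq> 0"
    and v: "\<And>z. z \<in> {a..b} \<Longrightarrow> (v has_vector_derivative v' z) (at z within {a..b})"
    and \<Psi>: "\<And>z. z \<in> {a..b} \<Longrightarrow> (\<Psi> has_vector_derivative \<Psi>' z) (at z within {a..b})"
    and "continuous_on {a..b} v'"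
  defines "E \<equiv> \<lambda>z. exp (\<Psi> z / of_real h)"
  shows "((\<lambda>z. v z * \<Psi>' z * E z) has_integral
           of_real h * (v b * E b - v a * E a - integral {a..b} (\<lambda>z. v' z * E z))) {a..b}"
proof -
  have E: "(E has_vector_derivative \<Psi>' z / of_real h * E z) (at z within {a..b})"
    if "z \<in> {a..b}" for z
    unfolding E_def by (rule has_vector_derivative_exp_div[OF \<Psi>[OF that]])
  have D: "((\<lambda>z. v z * E z) has_vector_derivative v z * (\<Psi>' z / of_real h * E z) + v' z * E z)
          (at z within {a..b})" if "z \<in> {a..b}" for z
    by (rule has_vector_derivative_mult[OF v[OF that] E[OF that]])
  have ftc: "((\<lambda>z. v z * (\<Psi>' z / of_real h * E z) + v' z * E z) has_integral v b * E b - v a * E a) {a..b}"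
    by (rule fundamental_theorem_of_calculus[OF \<open>a \<le> b\<close>, of "\<lambda>z. v z * E z"]) (rule D)
  have "continuous_on {a..b} E"
    by (rule continuous_on_vector_derivative) (rule E)
  then have "(\<lambda>z. v' z * E z) integrable_on {a..b}"
    using assms(5) by (intro integrable_continuous_interval continuous_on_mult)
  from has_integral_diff[OF ftc integrable_integral[OF this]]
  have "((\<lambda>z. v z * (\<Psi>' z / of_real h * E z)) has_integral
          v b * E b - v a * E a - integral {a..b} (\<lambda>z. v' z * E z)) {a..b}"
    by simp
  from has_integral_mult_right[OF this, of "of_real h"]
  moreover have "of_real h * (v z * (\<Psi>' z / of_real h * E z)) = v z * \<Psi>' z * E z" for z
    using \<open>h \<noteq> 0\<close> by simp
  ultimately show ?thesis
    by simp
qed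

locale nonstationary_phase =
  fixes a b c c' :: real and P :: "'p set" and \<Psi> \<Psi>' :: "'p \<Rightarrow> real \<Rightarrow> complex"
  assumes interval: "a \<le> b" and c_pos: "c > 0" and c'_pos: "c' > 0"
    and has_derivative: "\<And>p z. p \<in> P \<Longrightarrow> z \<in> {a..b} \<Longrightarrow> (\<Psi> p has_vector_derivative \<Psi>' p z) (at z within {a..b})"
    and derivative_smooth: "\<And>n. bounded_Cn_family n P {a..b} \<Psi>'"
    and derivative_ge: "\<And>p z. p \<in> P \<Longrightarrow> z \<in> {a..b} \<Longrightarrow> c \<le> norm (\<Psi>' p z)"
    and Re_nonpos: "\<And>p z. p \<in> P \<Longrightarrow> z \<in> {a..b} \<Longrightarrow> Re (\<Psi> p z) \<le> 0"
    and Re_endpoints: "\<And>p. p \<in> P \<Longrightarrow> Re (\<Psi> p a) \<le> - c'" "\<And>p. p \<in> P \<Longrightarrow> Re (\<Psi> p b) \<le> - c'"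
begin

lemma continuous_on_exp: "p \<in> P \<Longrightarrow> continuous_on {a..b} (\<lambda>z. exp (\<Psi> p z / of_real h))"
  by (rule continuous_on_vector_derivative) (rule has_vector_derivative_exp_div[OF has_derivative])

lemma norm_exp_le_one: "p \<in> P \<Longrightarrow> z \<in> {a..b} \<Longrightarrow> h > 0 \<Longrightarrow> norm (exp (\<Psi> p z / of_real h)) \<le> 1"
  using Re_nonpos by (simp add: Re_divide_of_real divide_nonpos_pos)

lemma norm_exp_endpoint_le:
  assumes "p \<in> P" "h > 0" "w \<in> {a, b}"
  shows "norm (exp (\<Psi> p w / of_real h)) \<le> exp (- c' / h)"
proof -
  have "Re (\<Psi> p w) \<le> - c'"
    using assms Re_endpoints by auto
  from divide_right_mono[OF this, of h] show ?thesis
    using \<open>h > 0\<close> by (simp add: Re_divide_of_real)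
qed

lemma norm_integral_by_parts_le:
  assumes p: "p \<in> P" and h: "h > 0"
    and u: "\<And>z. z \<in> {a..b} \<Longrightarrow> u z = v z * \<Psi>' p z"
    and v: "\<And>z. z \<in> {a..b} \<Longrightarrow> (v has_vector_derivative v' z) (at z within {a..b})"
    and "continuous_on {a..b} v'"
  shows "norm (integral {a..b} (\<lambda>z. u z * exp (\<Psi> p z / of_real h)))
           \<le> h * ((norm (v a) + norm (v b)) * exp (- c' / h)
                  + norm (integral {a..b} (\<lambda>z. v' z * exp (\<Psi> p z / of_real h))))"
proof -
  define E where "E z = exp (\<Psi> p z / of_real h)" for z
  define J where "J = integral {a..b} (\<lambda>z. v' z * E z)"
  have "integral {a..b} (\<lambda>z. u z * E z) = integral {a..b} (\<lambda>z. v z * \<Psi>' p z * E z)"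
    using u by (intro integral_cong) simp
  then have "norm (integral {a..b} (\<lambda>z. u z * E z)) = h * norm (v b * E b - v a * E a - J)"
    using has_integral_exp_phase_by_parts[OF interval _ v has_derivative[OF p] assms(5), of h] h
    unfolding E_def J_def by (simp add: integral_unique norm_mult)
  also have "\<dots> \<le> h * (norm (v b) * norm (E b) + norm (v a) * norm (E a) + norm J)"
  proof -
    have "norm (v b * E b - v a * E a - J) \<le> norm (v b * E b) + norm (v a * E a) + norm J"
      by (rule order_trans[OF norm_triangle_ineq4 add_right_mono[OF norm_triangle_ineq4]])
    then show ?thesis
      using h by (intro mult_left_mono) (simp_all add: norm_mult)
  qed
  also have "\<dots> \<le> h * (norm (v b) * exp (- c' / h) + norm (v a) * exp (- c' / h) + norm J)"
    using norm_exp_endpoint_le[OF p h] h unfolding E_def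
    by (intro mult_left_mono add_mono mult_left_mono) auto
  finally show ?thesis
    unfolding E_def J_def by (simp add: algebra_simps)
qed

lemma derivative_nonzero: "p \<in> P \<Longrightarrow> z \<in> {a..b} \<Longrightarrow> \<Psi>' p z \<noteq> 0"
  using derivative_ge c_pos by (metis norm_zero not_le)

lemma bounded_Cn_family_mult_inverse_derivative:
  assumes "bounded_Cn_family n P {a..b} u"
  shows "bounded_Cn_family n P {a..b} (\<lambda>p z. u p z * inverse (\<Psi>' p z))"
  using assms bounded_Cn_family_inverse[OF c_pos derivative_ge derivative_smooth] by (rule bounded_Cn_family_mult)

lemma integral_bound_0:
  assumes "bounded_continuous_family P {a..b} u"
  shows "\<exists>C. \<forall>p\<in>P. \<forall>h>0. norm (integral {a..b} (\<lambda>z. u p z * exp (\<Psi> p z / of_real h))) \<le> C * h ^ 0"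
proof -
  obtain B where B: "\<forall>p\<in>P. \<forall>z\<in>{a..b}. norm (u p z) \<le> B" and cont: "\<forall>p\<in>P. continuous_on {a..b} (u p)"
    using assms unfolding bounded_continuous_family_def by blast
  have "norm (integral {a..b} (\<lambda>z. u p z * exp (\<Psi> p z / of_real h))) \<le> B * (b - a)"
    if p: "p \<in> P" and h: "h > 0" for p h
  proof (rule integral_bound[OF interval])
    show "continuous_on {a..b} (\<lambda>z. u p z * exp (\<Psi> p z / of_real h))"
      using cont continuous_on_exp p by (intro continuous_on_mult) auto
    show "norm (u p z * exp (\<Psi> p z / of_real h)) \<le> B" if "z \<in> {a..b}" for z
    proof -
      have uB: "norm (u p z) \<le> B"
        using B p that by blast
      have "norm (u p z) * norm (exp (\<Psi> p z / of_real h)) \<le> B * 1"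
        using norm_exp_le_one[OF p that h] uB order_trans[OF norm_ge_zero uB]
        by (intro mult_mono) simp_all
      then show ?thesis
        by (simp add: norm_mult)
    qed
  qed
  then show ?thesis
    by (intro exI[of _ "B * (b - a)"]) simp
qed

lemma integral_bound_Suc:
  assumes IH: "\<And>v. bounded_Cn_family N P {a..b} v \<Longrightarrow>
      \<exists>C. \<forall>p\<in>P. \<forall>h>0. norm (integral {a..b} (\<lambda>z. v p z * exp (\<Psi> p z / of_real h))) \<le> C * h ^ N"
    and u: "bounded_Cn_family (Suc N) P {a..b} u"
  shows "\<exists>C. \<forall>p\<in>P. \<forall>h>0. norm (integral {a..b} (\<lambda>z. u p z * exp (\<Psi> p z / of_real h))) \<le> C * h ^ Suc N"
proof -
  \<comment> \<open>write \<open>u = v \<Psi>'\<close> and integrate by parts\<close>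
  define v where "v p z = u p z * inverse (\<Psi>' p z)" for p z
  have "bounded_Cn_family (Suc N) P {a..b} v"
    unfolding v_def using u by (rule bounded_Cn_family_mult_inverse_derivative)
  then obtain v' where
    v': "\<forall>p\<in>P. \<forall>z\<in>{a..b}. (v p has_vector_derivative v' p z) (at z within {a..b})"
      "bounded_Cn_family N P {a..b} v'"
    and "bounded_continuous_family P {a..b} v"
    by auto
  then obtain Bv where Bv: "\<forall>p\<in>P. \<forall>z\<in>{a..b}. norm (v p z) \<le> Bv"
    unfolding bounded_continuous_family_def by blast
  obtain C1 where C1: "\<forall>p\<in>P. \<forall>h>0. norm (integral {a..b} (\<lambda>z. v' p z * exp (\<Psi> p z / of_real h))) \<le> C1 * h ^ N"
    using IH[OF v'(2)] by blast
  obtain C2 where C2: "\<forall>h>0. exp (- c' / h) \<le> C2 * h ^ N"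
    using exp_neg_div_le_power[OF c'_pos] by blast
  have "norm (integral {a..b} (\<lambda>z. u p z * exp (\<Psi> p z / of_real h))) \<le> (2 * Bv * C2 + C1) * h ^ Suc N"
    if p: "p \<in> P" and h: "h > 0" for p h
  proof -
    have "norm (integral {a..b} (\<lambda>z. u p z * exp (\<Psi> p z / of_real h)))
        \<le> h * ((norm (v p a) + norm (v p b)) * exp (- c' / h)
                  + norm (integral {a..b} (\<lambda>z. v' p z * exp (\<Psi> p z / of_real h))))"
    proof (rule norm_integral_by_parts_le[OF p h])
      show "u p z = v p z * \<Psi>' p z" if "z \<in> {a..b}" for z
        using derivative_nonzero[OF p that] by (simp add: v_def)
      show "(v p has_vector_derivative v' p z) (at z within {a..b})" if "z \<in> {a..b}" for z
        using v'(1) p that by blast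
      show "continuous_on {a..b} (v' p)"
        using bounded_Cn_family_imp_bounded_continuous[OF v'(2)] p
        unfolding bounded_continuous_family_def by blast
    qed
    also have "\<dots> \<le> h * ((Bv + Bv) * (C2 * h ^ N) + C1 * h ^ N)"
    proof -
      have "norm (v p a) \<le> Bv" "norm (v p b) \<le> Bv"
        using Bv p interval by auto
      moreover have "0 \<le> exp (- c' / h)" "exp (- c' / h) \<le> C2 * h ^ N"
        using C2 h by auto
      moreover have "norm (integral {a..b} (\<lambda>z. v' p z * exp (\<Psi> p z / of_real h))) \<le> C1 * h ^ N"
        using C1 p h by blast
      ultimately show ?thesis
        using h order_trans[OF norm_ge_zero \<open>norm (v p a) \<le> Bv\<close>]
        by (intro mult_left_mono add_mono mult_mono) auto
    qed
    also have "\<dots> = (2 * Bv * C2 + C1) * h ^ Suc N"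
      by (simp add: algebra_simps)
    finally show ?thesis .
  qed
  then show ?thesis
    by blast
qed

lemma integral_bound:
  "bounded_Cn_family N P {a..b} u \<Longrightarrow>
     \<exists>C. \<forall>p\<in>P. \<forall>h>0. norm (integral {a..b} (\<lambda>z. u p z * exp (\<Psi> p z / of_real h))) \<le> C * h ^ N"
proof (induction N arbitrary: u)
  case 0
  then show ?case
    by (intro integral_bound_0) simp
next
  case (Suc N)
  then show ?case
    by (intro integral_bound_Suc)
qed

end

section \<open>Gaussian sums over the integer lattice\<close>

definition two_sided_geometric :: "real \<Rightarrow> int \<Rightarrow> int \<Rightarrow> real" where
  "two_sided_geometric r n k = (if k > n then r ^ nat (k - n - 1) else r ^ nat (n - k))"

lemma two_sided_geometric_has_sum:
  assumes "0 \<le> r" "r < 1"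
  shows "(two_sided_geometric r n has_sum (2 / (1 - r))) UNIV"
proof -
  have g: "((\<lambda>j::nat. r ^ j) has_sum (1 / (1 - r))) UNIV"
    using assms by (intro sums_nonneg_imp_has_sum geometric_sums) auto
  have "((\<lambda>j::nat. r ^ j) has_sum (1 / (1 - r))) UNIV
          = (two_sided_geometric r n has_sum (1 / (1 - r))) {k. k > n}"
    by (rule has_sum_reindex_bij_witness[where i = "\<lambda>k. nat (k - n - 1)" and j = "\<lambda>j. n + 1 + int j"])
       (simp_all add: two_sided_geometric_def)
  moreover have "((\<lambda>j::nat. r ^ j) has_sum (1 / (1 - r))) UNIV
          = (two_sided_geometric r n has_sum (1 / (1 - r))) {k. k \<le> n}"
    by (rule has_sum_reindex_bij_witness[where i = "\<lambda>k. nat (n - k)" and j = "\<lambda>j. n - int j"])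
       (simp_all add: two_sided_geometric_def)
  ultimately have "(two_sided_geometric r n has_sum (1 / (1 - r) + 1 / (1 - r))) ({k. k > n} \<union> {k. k \<le> n})"
    using g by (intro has_sum_Un_disjoint) auto
  moreover have "{k. k > n} \<union> {k. k \<le> n} = (UNIV :: int set)"
    by auto
  ultimately show ?thesis
    by simp
qed

definition gauss_lattice_const :: real where
  "gauss_lattice_const = 2 / (1 - exp (- 1 / 8))"

lemma gauss_lattice_const_pos: "gauss_lattice_const > 0"
  unfolding gauss_lattice_const_def by simp

lemma gauss_le_two_sided_geometric:
  fixes t :: real and k :: int
  shows "exp (- ((t - k)\<^sup>2) / 8) \<le> two_sided_geometric (exp (- 1 / 8)) \<lfloor>t\<rfloor> k"
proof -
  have key: "exp (- ((t - k)\<^sup>2) / 8) \<le> exp (- 1 / 8) ^ j" if "real j \<le> \<bar>t - k\<bar>" for j :: nat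
  proof -
    have "real j \<le> (t - k)\<^sup>2"
    proof (cases j)
      case (Suc i)
      then have "real j \<le> real j * real j"
        by simp
      also have "\<dots> \<le> \<bar>t - k\<bar> * \<bar>t - k\<bar>"
        using that by (intro mult_mono) auto
      finally show ?thesis
        by (simp add: power2_eq_square)
    qed simp
    then have "exp (- ((t - k)\<^sup>2) / 8) \<le> exp (real j * (- 1 / 8))"
      by simp
    also have "\<dots> = exp (- 1 / 8) ^ j"
      by (rule exp_of_nat_mult)
    finally show ?thesis .
  qed
  show ?thesis
  proof (cases "k > \<lfloor>t\<rfloor>")
    case True
    then have "real (nat (k - \<lfloor>t\<rfloor> - 1)) \<le> \<bar>t - k\<bar>"
      by linarith
    with True show ?thesis
      using key unfolding two_sided_geometric_def by simp
  next
    case False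
    then have "real (nat (\<lfloor>t\<rfloor> - k)) \<le> \<bar>t - k\<bar>"
      by linarith
    with False show ?thesis
      using key unfolding two_sided_geometric_def by simp
  qed
qed

lemma gauss_lattice_sum:
  fixes t :: real
  shows "(\<lambda>k::int. exp (- ((t - k)\<^sup>2) / 8)) summable_on UNIV"
    and "(\<Sum>\<^sub>\<infinity>k::int. exp (- ((t - k)\<^sup>2) / 8)) \<le> gauss_lattice_const"
proof -
  have G: "(two_sided_geometric (exp (- 1 / 8)) \<lfloor>t\<rfloor> has_sum gauss_lattice_const) UNIV"
    unfolding gauss_lattice_const_def by (rule two_sided_geometric_has_sum) auto
  have "(\<lambda>k. norm (two_sided_geometric (exp (- 1 / 8)) \<lfloor>t\<rfloor> k)) summable_on UNIV"
    using has_sum_imp_summable[OF G] summable_on_iff_abs_summable_on_real by blast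
  then have "(\<lambda>k::int. norm (exp (- ((t - k)\<^sup>2) / 8))) summable_on UNIV"
    by (rule Infinite_Sum.abs_summable_on_comparison_test)
       (simp only: real_norm_def abs_exp_cancel, rule order_trans[OF gauss_le_two_sided_geometric abs_ge_self])
  then show S: "(\<lambda>k::int. exp (- ((t - k)\<^sup>2) / 8)) summable_on UNIV"
    by (rule abs_summable_summable)
  show "(\<Sum>\<^sub>\<infinity>k::int. exp (- ((t - k)\<^sup>2) / 8)) \<le> gauss_lattice_const"
    using infsum_mono[OF S has_sum_imp_summable[OF G] gauss_le_two_sided_geometric] infsumI[OF G]
    by simp
qed

lemma exp_gauss_le_mult:
  fixes s d h :: real
  assumes "0 < h" "h \<le> 1" "0 \<le> d" "d \<le> \<bar>s\<bar>"
  shows "exp (- (s\<^sup>2) / (4 * h)) \<le> exp (- (d\<^sup>2) / (8 * h)) * exp (- (s\<^sup>2) / 8)"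
proof -
  \<comment> \<open>half of the exponent gives the factor in \<open>d\<close>, the other half is at least the \<open>h = 1\<close> exponent\<close>
  have "d\<^sup>2 \<le> \<bar>s\<bar>\<^sup>2"
    using assms by (intro power_mono) auto
  then have "d\<^sup>2 / (8 * h) \<le> s\<^sup>2 / (8 * h)"
    using assms by (simp add: divide_right_mono)
  moreover have "s\<^sup>2 / 8 \<le> s\<^sup>2 / (8 * h)"
    using assms by (intro divide_left_mono) auto
  moreover have "s\<^sup>2 / (4 * h) = s\<^sup>2 / (8 * h) + s\<^sup>2 / (8 * h)"
    using assms by (simp add: field_simps)
  ultimately have "- (s\<^sup>2) / (4 * h) \<le> - (d\<^sup>2) / (8 * h) + - (s\<^sup>2) / 8"
    by simp
  then show ?thesis
    by (simp add: exp_add [symmetric])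
qed

lemma gauss_lattice_tail:
  fixes t d h :: real and T :: "int set"
  assumes h: "0 < h" "h \<le> 1" and d: "0 \<le> d" "\<And>k. k \<in> T \<Longrightarrow> d \<le> \<bar>t - k\<bar>"
  shows "(\<lambda>k::int. exp (- ((t - k)\<^sup>2) / (4 * h))) summable_on T"
    and "(\<Sum>\<^sub>\<infinity>k\<in>T. exp (- ((t - k)\<^sup>2) / (4 * h))) \<le> gauss_lattice_const * exp (- (d\<^sup>2) / (8 * h))"
proof -
  define e where "e = exp (- (d\<^sup>2) / (8 * h))"
  have le: "exp (- ((t - k)\<^sup>2) / (4 * h)) \<le> e * exp (- ((t - k)\<^sup>2) / 8)" if "k \<in> T" for k
    unfolding e_def using h d that by (intro exp_gauss_le_mult)
  have S8: "(\<lambda>k::int. exp (- ((t - k)\<^sup>2) / 8)) summable_on T"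
    using gauss_lattice_sum(1) by (rule summable_on_subset_banach) simp
  have "(\<lambda>k::int. norm (e * exp (- ((t - k)\<^sup>2) / 8))) summable_on T"
    using summable_on_cmult_right[OF S8] by (rule summable_on_iff_abs_summable_on_real[THEN iffD1])
  then have "(\<lambda>k::int. norm (exp (- ((t - k)\<^sup>2) / (4 * h)))) summable_on T"
    by (rule Infinite_Sum.abs_summable_on_comparison_test)
       (simp only: real_norm_def abs_exp_cancel, rule order_trans[OF le abs_ge_self], assumption)
  then show S: "(\<lambda>k::int. exp (- ((t - k)\<^sup>2) / (4 * h))) summable_on T"
    by (rule abs_summable_summable)
  have "(\<Sum>\<^sub>\<infinity>k\<in>T. exp (- ((t - k)\<^sup>2) / (4 * h))) \<le> (\<Sum>\<^sub>\<infinity>k\<in>T. e * exp (- ((t - k)\<^sup>2) / 8))"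
    by (rule infsum_mono[OF S summable_on_cmult_right[OF S8] le])
  also have "\<dots> = e * (\<Sum>\<^sub>\<infinity>k\<in>T. exp (- ((t - k)\<^sup>2) / 8))"
    by (rule infsum_cmult_right')
  also have "\<dots> \<le> e * gauss_lattice_const"
  proof (rule mult_left_mono)
    have "(\<Sum>\<^sub>\<infinity>k\<in>T. exp (- ((t - k)\<^sup>2) / 8)) \<le> (\<Sum>\<^sub>\<infinity>k::int. exp (- ((t - k)\<^sup>2) / 8))"
      by (rule infsum_mono_neutral[OF S8 gauss_lattice_sum(1)]) auto
    then show "(\<Sum>\<^sub>\<infinity>k\<in>T. exp (- ((t - k)\<^sup>2) / 8)) \<le> gauss_lattice_const"
      using gauss_lattice_sum(2)[of t] by linarith
  qed (simp add: e_def)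
  finally show "(\<Sum>\<^sub>\<infinity>k\<in>T. exp (- ((t - k)\<^sup>2) / (4 * h))) \<le> gauss_lattice_const * exp (- (d\<^sup>2) / (8 * h))"
    unfolding e_def by (simp add: mult.commute)
qed

section \<open>Periodic wavepackets\<close>

definition gauss_term :: "real \<Rightarrow> real \<Rightarrow> real \<Rightarrow> int \<Rightarrow> real \<Rightarrow> complex" where
  "gauss_term h x \<xi> k z = exp (\<i> * complex_of_real (\<xi> * (z - of_int k) / h))
                          * complex_of_real (exp (- ((z - of_int k - x)\<^sup>2) / (4 * h)))"

lemma wavepacket_eq_infsum: "wavepacket h x \<xi> z = (\<Sum>\<^sub>\<infinity>k. gauss_term h x \<xi> k z)"
  unfolding wavepacket_def gauss_term_def ..

lemma norm_gauss_term: "norm (gauss_term h x \<xi> k z) = exp (- ((z - x - of_int k)\<^sup>2) / (4 * h))"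
proof -
  have "(z - of_int k - x)\<^sup>2 = (z - x - of_int k)\<^sup>2"
    by (simp add: algebra_simps)
  then show ?thesis
    unfolding gauss_term_def norm_mult by simp
qed

lemma wavepacket_minus_finite_sum:
  assumes h: "0 < h" "h \<le> 1" and "finite M" "0 \<le> d"
    and far: "\<And>k. k \<notin> M \<Longrightarrow> d \<le> \<bar>z - x - of_int k\<bar>"
  shows "norm (wavepacket h x \<xi> z - (\<Sum>k\<in>M. gauss_term h x \<xi> k z))
           \<le> gauss_lattice_const * exp (- (d\<^sup>2) / (8 * h))"
proof -
  have "(\<lambda>k::int. exp (- ((z - x - k)\<^sup>2) / (4 * h))) summable_on (- M)"
    and tail: "(\<Sum>\<^sub>\<infinity>k\<in>- M. exp (- ((z - x - k)\<^sup>2) / (4 * h))) \<le> gauss_lattice_const * exp (- (d\<^sup>2) / (8 * h))"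
    using gauss_lattice_tail[OF h, of d "- M" "z - x"] far \<open>0 \<le> d\<close> by auto
  then have A: "(\<lambda>k. norm (gauss_term h x \<xi> k z)) summable_on (- M)"
    by (simp add: norm_gauss_term)
  have "(\<Sum>\<^sub>\<infinity>k\<in>M \<union> - M. gauss_term h x \<xi> k z)
          = (\<Sum>\<^sub>\<infinity>k\<in>M. gauss_term h x \<xi> k z) + (\<Sum>\<^sub>\<infinity>k\<in>- M. gauss_term h x \<xi> k z)"
    using \<open>finite M\<close> abs_summable_summable[OF A] by (intro infsum_Un_disjoint) auto
  then have "wavepacket h x \<xi> z - (\<Sum>k\<in>M. gauss_term h x \<xi> k z) = (\<Sum>\<^sub>\<infinity>k\<in>- M. gauss_term h x \<xi> k z)"
    using \<open>finite M\<close> by (simp add: wavepacket_eq_infsum)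
  also have "norm \<dots> \<le> (\<Sum>\<^sub>\<infinity>k\<in>- M. norm (gauss_term h x \<xi> k z))"
    by (rule norm_infsum_bound[OF A])
  also have "\<dots> \<le> gauss_lattice_const * exp (- (d\<^sup>2) / (8 * h))"
    using tail by (simp add: norm_gauss_term)
  finally show ?thesis .
qed

lemma norm_wavepacket_le: "0 < h \<Longrightarrow> h \<le> 1 \<Longrightarrow> norm (wavepacket h x \<xi> z) \<le> gauss_lattice_const"
  using wavepacket_minus_finite_sum[of h "{}" 0 z x \<xi>] by simp

lemma wavepacket_shift_int: "wavepacket h x \<xi> (z + of_int n) = wavepacket h x \<xi> z"
proof -
  have "(\<Sum>\<^sub>\<infinity>k. gauss_term h x \<xi> k (z + of_int n)) = (\<Sum>\<^sub>\<infinity>k. gauss_term h x \<xi> k z)"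
    by (rule infsum_reindex_bij_witness[where j = "\<lambda>k. k - n" and i = "\<lambda>k. k + n"])
       (auto simp: gauss_term_def algebra_simps)
  then show ?thesis
    unfolding wavepacket_eq_infsum .
qed

lemma wavepacket_frac: "wavepacket h x \<xi> (frac z) = wavepacket h x \<xi> z"
  using wavepacket_shift_int[of h x \<xi> z "- \<lfloor>z\<rfloor>"] by (simp add: frac_def)

lemma wavepacket_approx_center:
  assumes "0 < h" "h \<le> 1" "\<bar>z - y\<bar> \<le> 5 / 8"
  shows "norm (wavepacket h y \<eta> z - gauss_term h y \<eta> 0 z) \<le> gauss_lattice_const * exp (- (9 / 512) / h)"
proof -
  have "3 / 8 \<le> \<bar>z - y - of_int k\<bar>" if "k \<notin> {0}" for k
  proof -
    from that have "real_of_int k \<ge> 1 \<or> real_of_int k \<le> - 1"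
      by (cases "k \<ge> 1") auto
    with assms(3) show ?thesis
      by linarith
  qed
  from wavepacket_minus_finite_sum[OF assms(1,2), of "{0}" "3 / 8", OF _ _ this]
  show ?thesis
    by (simp add: power2_eq_square)
qed

lemma wavepacket_approx_window:
  assumes "0 < h" "h \<le> 1" "\<bar>z - x - c\<bar> \<le> 1"
  shows "norm (wavepacket h x \<xi> z - (\<Sum>k\<in>{\<lfloor>c\<rfloor> - 2..\<lfloor>c\<rfloor> + 2}. gauss_term h x \<xi> k z))
           \<le> gauss_lattice_const * exp (- 1 / (8 * h))"
proof -
  have "1 \<le> \<bar>z - x - of_int k\<bar>" if "k \<notin> {\<lfloor>c\<rfloor> - 2..\<lfloor>c\<rfloor> + 2}" for k
  proof -
    from that have "real_of_int k \<ge> real_of_int \<lfloor>c\<rfloor> + 3 \<or> real_of_int k \<le> real_of_int \<lfloor>c\<rfloor> - 3"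
      by (cases "k \<ge> \<lfloor>c\<rfloor> + 3") auto
    with assms(3) show ?thesis
      by linarith
  qed
  from wavepacket_minus_finite_sum[OF assms(1,2), of "{\<lfloor>c\<rfloor> - 2..\<lfloor>c\<rfloor> + 2}" 1, OF _ _ this]
  show ?thesis
    by simp
qed

section \<open>Integrals over a period\<close>

lemma has_integral_periodic_window:
  fixes F :: "real \<Rightarrow> 'a::banach"
  assumes per: "\<And>z. F (z + 1) = F z" and I: "(F has_integral I) {0..1}" and a: "- 1 \<le> a" "a \<le> 1"
  shows "(F has_integral I) {a..a + 1}"
proof (cases "0 \<le> a")
  case True
  have int: "F integrable_on {0..a}" "F integrable_on {a..1}"
    using I True a by (auto intro: integrable_subinterval_real[OF has_integral_integrable[OF I]])
  have split: "integral {0..a} F + integral {a..1} F = I"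
    using Henstock_Kurzweil_Integration.integral_combine[of 0 a 1 F] True a
      has_integral_integrable[OF I] integral_unique[OF I] by auto
  have "((\<lambda>x. F (x + (- 1))) has_integral integral {0..a} F) {0 - (- 1)..a - (- 1)}"
    by (rule has_integral_shift_real_ivl) (use int in auto)
  moreover have "F (x + (- 1)) = F x" for x
    using per[of "x - 1"] by simp
  ultimately have "(F has_integral integral {0..a} F) {1..a + 1}"
    by simp
  then have "(F has_integral (integral {a..1} F + integral {0..a} F)) {a..a + 1}"
    by (intro has_integral_combine[of a 1 "a + 1"]) (use a int True in auto)
  then show ?thesis
    using split by (simp add: add.commute)
next
  case False
  have int: "F integrable_on {0..a + 1}" "F integrable_on {a + 1..1}"
    using I False a by (auto intro: integrable_subinterval_real[OF has_integral_integrable[OF I]])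
  have split: "integral {0..a + 1} F + integral {a + 1..1} F = I"
    using Henstock_Kurzweil_Integration.integral_combine[of 0 "a + 1" 1 F] False a
      has_integral_integrable[OF I] integral_unique[OF I] by auto
  have "((\<lambda>x. F (x + 1)) has_integral integral {a + 1..1} F) {a + 1 - 1..1 - 1}"
    by (rule has_integral_shift_real_ivl) (use int in auto)
  then have "(F has_integral integral {a + 1..1} F) {a..0}"
    using per by simp
  then have "(F has_integral (integral {a + 1..1} F + integral {0..a + 1} F)) {a..a + 1}"
    by (intro has_integral_combine[of a 0 "a + 1"]) (use a int False in auto)
  then show ?thesis
    using split by (simp add: add.commute)
qed

text \<open>No integrability of \<open>F\<close> is assumed: a non-integrable \<open>F\<close> has integral \<open>0\<close>.\<close>

lemma norm_integral_periodic_le: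
  fixes F G :: "real \<Rightarrow> 'a::banach"
  assumes per: "\<And>z. F (z + 1) = F z" and a: "- 1 \<le> a" "a \<le> 1"
    and G: "G integrable_on {a..a + 1}"
    and close: "\<And>z. z \<in> {a..a + 1} \<Longrightarrow> norm (F z - G z) \<le> \<epsilon>"
  shows "norm (integral {0..1} F) \<le> norm (integral {a..a + 1} G) + \<epsilon>"
proof (cases "F integrable_on {0..1}")
  case True
  then have "(F has_integral integral {0..1} F) {a..a + 1}"
    using per a by (intro has_integral_periodic_window) auto
  from has_integral_diff[OF this integrable_integral[OF G]]
  have "norm (integral {0..1} F - integral {a..a + 1} G) \<le> \<epsilon> * Henstock_Kurzweil_Integration.content {a..a + 1}"
    using close order_trans[OF norm_ge_zero close[of a]]
    by (intro has_integral_bound_real[where S = "{}"]) auto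
  then have "norm (integral {0..1} F - integral {a..a + 1} G) \<le> \<epsilon>"
    by simp
  then show ?thesis
    using norm_triangle_sub[of "integral {0..1} F" "integral {a..a + 1} G"] by linarith
next
  case False
  have "0 \<le> \<epsilon>"
    using order_trans[OF norm_ge_zero close[of a]] by simp
  with False show ?thesis
    by (simp add: not_integrable_integral)
qed

section \<open>Rapid decrease, locally uniformly in the parameters\<close>

definition rapidly_decreasing_near :: "('a::metric_space \<Rightarrow> real \<Rightarrow> complex) \<Rightarrow> 'a \<Rightarrow> bool" where
  "rapidly_decreasing_near F p\<^sub>0 \<longleftrightarrow>
     (\<exists>e>0. \<forall>N::nat. \<exists>C. \<forall>p\<in>ball p\<^sub>0 e. \<forall>h. 0 < h \<and> h \<le> 1 \<longrightarrow> norm (F p h) \<le> C * h ^ N)"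

lemma rapidly_decreasing_nearI:
  assumes "e > 0" "\<And>N. \<exists>C. \<forall>p\<in>ball p\<^sub>0 e. \<forall>h. 0 < h \<and> h \<le> 1 \<longrightarrow> norm (F p h) \<le> C * h ^ N"
  shows "rapidly_decreasing_near F p\<^sub>0"
  using assms unfolding rapidly_decreasing_near_def by blast

lemma rapidly_decreasing_near_dominated:
  assumes G: "rapidly_decreasing_near G p\<^sub>0" and H: "rapidly_decreasing_near H p\<^sub>0" and "e > 0"
    and le: "\<And>p h. p \<in> ball p\<^sub>0 e \<Longrightarrow> 0 < h \<Longrightarrow> h \<le> 1 \<Longrightarrow> norm (F p h) \<le> norm (G p h) + norm (H p h)"
  shows "rapidly_decreasing_near F p\<^sub>0"
proof -
  obtain eG eH where eG: "eG > 0" "\<And>N. \<exists>C. \<forall>p\<in>ball p\<^sub>0 eG. \<forall>h. 0 < h \<and> h \<le> 1 \<longrightarrow> norm (G p h) \<le> C * h ^ N"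
    and eH: "eH > 0" "\<And>N. \<exists>C. \<forall>p\<in>ball p\<^sub>0 eH. \<forall>h. 0 < h \<and> h \<le> 1 \<longrightarrow> norm (H p h) \<le> C * h ^ N"
    using G H unfolding rapidly_decreasing_near_def by blast
  show ?thesis
  proof (rule rapidly_decreasing_nearI)
    show "min e (min eG eH) > 0"
      using \<open>e > 0\<close> eG(1) eH(1) by simp
    fix N
    obtain CG CH where
      "\<forall>p\<in>ball p\<^sub>0 eG. \<forall>h. 0 < h \<and> h \<le> 1 \<longrightarrow> norm (G p h) \<le> CG * h ^ N"
      "\<forall>p\<in>ball p\<^sub>0 eH. \<forall>h. 0 < h \<and> h \<le> 1 \<longrightarrow> norm (H p h) \<le> CH * h ^ N"
      using eG(2) eH(2) by blast
    then have "\<forall>p\<in>ball p\<^sub>0 (min e (min eG eH)). \<forall>h. 0 < h \<and> h \<le> 1 \<longrightarrow> norm (F p h) \<le> (CG + CH) * h ^ N"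
      using le by (fastforce simp: distrib_right intro: order_trans add_mono)
    then show "\<exists>C. \<forall>p\<in>ball p\<^sub>0 (min e (min eG eH)). \<forall>h. 0 < h \<and> h \<le> 1 \<longrightarrow> norm (F p h) \<le> C * h ^ N"
      by blast
  qed
qed

lemma rapidly_decreasing_near_sum:
  assumes "finite M" "\<And>m. m \<in> M \<Longrightarrow> rapidly_decreasing_near (F m) p\<^sub>0"
  shows "rapidly_decreasing_near (\<lambda>p h. \<Sum>m\<in>M. F m p h) p\<^sub>0"
  using assms
proof (induction M rule: finite_induct)
  case empty
  show ?case
    by (rule rapidly_decreasing_nearI[OF zero_less_one]) (intro exI[of _ 0], simp)
next
  case (insert m M)
  then have "rapidly_decreasing_near (F m) p\<^sub>0" "rapidly_decreasing_near (\<lambda>p h. \<Sum>m\<in>M. F m p h) p\<^sub>0"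
    by simp_all
  moreover have "norm (\<Sum>m'\<in>insert m M. F m' p h) \<le> norm (F m p h) + norm (\<Sum>m'\<in>M. F m' p h)" for p h
    using insert(1,2) by (simp add: norm_triangle_ineq)
  ultimately show ?case
    by (rule rapidly_decreasing_near_dominated[OF _ _ zero_less_one])
qed

lemma rapidly_decreasing_near_exp:
  assumes "c > 0" "e > 0"
    and le: "\<And>p h. p \<in> ball p\<^sub>0 e \<Longrightarrow> 0 < h \<Longrightarrow> h \<le> 1 \<Longrightarrow> norm (F p h) \<le> K * exp (- c / h)"
  shows "rapidly_decreasing_near F p\<^sub>0"
proof (rule rapidly_decreasing_nearI[OF \<open>e > 0\<close>])
  fix N
  obtain C where C: "\<forall>h>0. exp (- c / h) \<le> C * h ^ N"
    using exp_neg_div_le_power[OF \<open>c > 0\<close>] by blast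
  have "norm (F p h) \<le> max K 0 * C * h ^ N" if "p \<in> ball p\<^sub>0 e" "0 < h" "h \<le> 1" for p h
  proof -
    have "norm (F p h) \<le> max K 0 * exp (- c / h)"
      using le[OF that] by (smt (verit) exp_ge_zero mult_right_mono)
    also have "\<dots> \<le> max K 0 * (C * h ^ N)"
      using C \<open>0 < h\<close> by (intro mult_left_mono) auto
    finally show ?thesis
      by (simp add: mult.assoc)
  qed
  then show "\<exists>C. \<forall>p\<in>ball p\<^sub>0 e. \<forall>h. 0 < h \<and> h \<le> 1 \<longrightarrow> norm (F p h) \<le> C * h ^ N"
    by blast
qed

lemma microlocally_small_if_rapidly_decreasing_near:
  assumes "rapidly_decreasing_near (\<lambda>p h. l2_inner (wavepacket h (fst p) (snd p)) (\<phi> h)) (x\<^sub>0, \<xi>\<^sub>0)"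
  shows "microlocally_small \<phi> x\<^sub>0 \<xi>\<^sub>0"
proof -
  obtain e where "e > 0" and e: "\<And>N::nat. \<exists>C. \<forall>p\<in>ball (x\<^sub>0, \<xi>\<^sub>0) e. \<forall>h. 0 < h \<and> h \<le> 1 \<longrightarrow>
      norm (l2_inner (wavepacket h (fst p) (snd p)) (\<phi> h)) \<le> C * h ^ N"
    using assms unfolding rapidly_decreasing_near_def by blast
  have "\<exists>C \<delta>. \<delta> > 0 \<and> (\<forall>h y \<eta>. 0 < h \<and> h \<le> \<delta> \<and> dist (y, \<eta>) (x\<^sub>0, \<xi>\<^sub>0) < e \<longrightarrow>
          norm (l2_inner (wavepacket h y \<eta>) (\<phi> h)) \<le> C * h powr N)" for N :: real
  proof -
    obtain C where C: "\<forall>p\<in>ball (x\<^sub>0, \<xi>\<^sub>0) e. \<forall>h. 0 < h \<and> h \<le> 1 \<longrightarrow>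
        norm (l2_inner (wavepacket h (fst p) (snd p)) (\<phi> h)) \<le> C * h ^ nat \<lceil>N\<rceil>"
      using e by blast
    have "norm (l2_inner (wavepacket h y \<eta>) (\<phi> h)) \<le> max C 0 * h powr N"
      if "0 < h" "h \<le> 1" "dist (y, \<eta>) (x\<^sub>0, \<xi>\<^sub>0) < e" for h y \<eta>
    proof -
      have "h ^ nat \<lceil>N\<rceil> = h powr real (nat \<lceil>N\<rceil>)"
        using \<open>0 < h\<close> by (simp add: powr_realpow)
      also have "\<dots> \<le> h powr N"
        using that by (intro powr_mono') linarith+
      finally have "C * h ^ nat \<lceil>N\<rceil> \<le> max C 0 * h powr N"
        by (smt (verit) mult_right_mono mult_left_mono zero_le_power \<open>0 < h\<close> powr_ge_zero)
      moreover have "(y, \<eta>) \<in> ball (x\<^sub>0, \<xi>\<^sub>0) e"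
        using that by (simp add: dist_commute)
      ultimately show ?thesis
        using C that by force
    qed
    then show ?thesis
      by (intro exI[of _ "max C 0"] exI[of _ 1]) auto
  qed
  with \<open>e > 0\<close> show ?thesis
    unfolding microlocally_small_def by blast
qed

section \<open>The phase of a matrix coefficient\<close>

definition phase :: "(real \<Rightarrow> real) \<Rightarrow> real \<Rightarrow> real \<Rightarrow> int \<Rightarrow> real \<times> real \<Rightarrow> real \<Rightarrow> complex" where
  "phase \<tau> x \<xi> m p z =
     complex_of_real (- ((z - fst p)\<^sup>2 + (2 * z - of_int m - x)\<^sup>2) / 4)
     + \<i> * complex_of_real (\<xi> * (2 * z - of_int m) + \<tau> z - snd p * z)"

definition phase_deriv :: "(real \<Rightarrow> real) \<Rightarrow> real \<Rightarrow> real \<Rightarrow> int \<Rightarrow> real \<times> real \<Rightarrow> real \<Rightarrow> complex" where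
  "phase_deriv \<tau> x \<xi> m p z =
     complex_of_real (- (5 * z - fst p - 2 * of_int m - 2 * x) / 2)
     + \<i> * complex_of_real (2 * \<xi> + deriv \<tau> z - snd p)"

lemma gauss_term_product_eq_exp_phase:
  assumes "h > 0"
  shows "cnj (gauss_term h y \<eta> 0 z) * (gauss_term h x \<xi> m (2 * z) * exp (\<i> * complex_of_real (1 / h * \<tau> z)))
           = exp (phase \<tau> x \<xi> m (y, \<eta>) z / complex_of_real h)"
proof -
  have "cnj (gauss_term h y \<eta> 0 z)
          = exp (- \<i> * complex_of_real (\<eta> * z / h)) * complex_of_real (exp (- ((z - y)\<^sup>2) / (4 * h)))"
    unfolding gauss_term_def by (simp add: exp_cnj)
  also have "\<dots> = exp (- \<i> * complex_of_real (\<eta> * z / h) + complex_of_real (- ((z - y)\<^sup>2) / (4 * h)))"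
    by (simp only: exp_add exp_of_real)
  finally have "cnj (gauss_term h y \<eta> 0 z)
          = exp (- \<i> * complex_of_real (\<eta> * z / h) + complex_of_real (- ((z - y)\<^sup>2) / (4 * h)))" .
  moreover have "gauss_term h x \<xi> m (2 * z)
      = exp (\<i> * complex_of_real (\<xi> * (2 * z - of_int m) / h)
             + complex_of_real (- ((2 * z - of_int m - x)\<^sup>2) / (4 * h)))"
    unfolding gauss_term_def by (simp only: exp_add exp_of_real)
  moreover have "(- \<i> * complex_of_real (\<eta> * z / h) + complex_of_real (- ((z - y)\<^sup>2) / (4 * h)))
      + ((\<i> * complex_of_real (\<xi> * (2 * z - of_int m) / h)
          + complex_of_real (- ((2 * z - of_int m - x)\<^sup>2) / (4 * h)))
         + \<i> * complex_of_real (1 / h * \<tau> z))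
      = phase \<tau> x \<xi> m (y, \<eta>) z / complex_of_real h"
    unfolding phase_def using assms by (simp add: complex_eq_iff field_simps)
  ultimately show ?thesis
    by (simp only: exp_add [symmetric])
qed

lemma has_vector_derivative_phase:
  assumes "smooth_fun \<tau>"
  shows "(phase \<tau> x \<xi> m p has_vector_derivative phase_deriv \<tau> x \<xi> m p z) (at z within S)"
proof -
  have "(\<tau> has_real_derivative deriv \<tau> z) (at z within S)"
    using smooth_fun_higher_deriv[OF assms, of 0 z] by (simp add: has_field_derivative_at_within)
  then have "((\<lambda>z. \<xi> * (2 * z - of_int m) + \<tau> z - snd p * z) has_real_derivative
           2 * \<xi> + deriv \<tau> z - snd p) (at z within S)"
    by (auto intro!: derivative_eq_intros)
  moreover have "((\<lambda>z. - ((z - fst p)\<^sup>2 + (2 * z - of_int m - x)\<^sup>2) / 4) has_real_derivative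
           - (5 * z - fst p - 2 * of_int m - 2 * x) / 2) (at z within S)"
    by (auto intro!: derivative_eq_intros simp: field_simps)
  ultimately show ?thesis
    unfolding phase_def phase_deriv_def
    by (intro has_vector_derivative_add has_vector_derivative_mult_right has_vector_derivative_of_real)
qed

lemma continuous_on_exp_phase:
  assumes "smooth_fun \<tau>" "h \<noteq> 0"
  shows "continuous_on S (\<lambda>z. exp (phase \<tau> x \<xi> m p z / complex_of_real h))"
proof -
  have "continuous_on S (phase \<tau> x \<xi> m p)"
    by (rule continuous_on_vector_derivative) (rule has_vector_derivative_phase[OF assms(1)])
  then show ?thesis
    using assms(2) by (intro continuous_intros) auto
qed

lemma Re_phase: "Re (phase \<tau> x \<xi> m p z) = - ((z - fst p)\<^sup>2 + (2 * z - of_int m - x)\<^sup>2) / 4"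
  unfolding phase_def by simp

lemma norm_exp_phase_div:
  "h > 0 \<Longrightarrow> norm (exp (phase \<tau> x \<xi> m p z / complex_of_real h)) = exp (Re (phase \<tau> x \<xi> m p z) / h)"
  by (simp add: Re_divide_of_real)

lemma abs_diff_less_if_mem_ball_pair:
  assumes "p \<in> ball (y\<^sub>0, \<eta>\<^sub>0) e"
  shows "\<bar>fst p - y\<^sub>0\<bar> < e" "\<bar>snd p - \<eta>\<^sub>0\<bar> < e"
  using assms dist_fst_le[of p "(y\<^sub>0, \<eta>\<^sub>0)"] dist_snd_le[of p "(y\<^sub>0, \<eta>\<^sub>0)"]
  by (auto simp: dist_real_def dist_commute)

lemma bounded_Cn_family_phase_deriv:
  assumes "smooth_fun \<tau>" "bounded P"
  shows "bounded_Cn_family n P {a..b} (phase_deriv \<tau> x \<xi> m)"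
proof -
  define K where "K p = complex_of_real ((fst p + 2 * of_int m + 2 * x) / 2)
                        + \<i> * complex_of_real (2 * \<xi> - snd p)" for p :: "real \<times> real"
  have "continuous_on (closure P) K"
    unfolding K_def by (intro continuous_intros) auto
  then have "bounded (K ` closure P)"
    using assms(2) by (intro compact_imp_bounded compact_continuous_image) simp_all
  then have "bounded (K ` P)"
    by (rule bounded_closure_image)
  then have "bounded_Cn_family n P {a..b} (\<lambda>p z. K p + (complex_of_real (- 5 / 2) * complex_of_real z
                                          + \<i> * complex_of_real ((deriv ^^ 1) \<tau> z)))"
    by (intro bounded_Cn_family_add bounded_Cn_family_mult bounded_Cn_family_const
        bounded_Cn_family_of_real_id bounded_Cn_family_smooth[OF assms(1)])
       (auto intro: bounded_subset[of "{_}"])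
  then show ?thesis
    by (rule bounded_Cn_family_cong) (simp add: K_def phase_deriv_def complex_eq_iff field_simps)
qed

lemma Re_phase_le_off_graph:
  assumes "\<bar>fst p - y\<^sub>0\<bar> < \<bar>2 * y\<^sub>0 - of_int m - x\<bar> / 4"
  shows "Re (phase \<tau> x \<xi> m p z) \<le> - ((2 * y\<^sub>0 - of_int m - x)\<^sup>2 / 80)"
proof -
  define q where "q = \<bar>2 * y\<^sub>0 - of_int m - x\<bar>"
  define r where "r = 2 * fst p - of_int m - x"
  have "q \<le> \<bar>r\<bar> + \<bar>2 * (y\<^sub>0 - fst p)\<bar>"
    using abs_triangle_ineq[of r "2 * (y\<^sub>0 - fst p)"] unfolding q_def r_def by simp
  moreover have "\<bar>2 * (y\<^sub>0 - fst p)\<bar> = 2 * \<bar>fst p - y\<^sub>0\<bar>"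
    by (simp only: abs_mult abs_minus_commute abs_numeral)
  moreover have "q / 2 \<le> R" if "q \<le> R + A" "A = 2 * B" "B < q / 4" for R A B :: real
    using that by linarith
  ultimately have "q / 2 \<le> \<bar>r\<bar>"
    using assms unfolding q_def by blast
  then have "(q / 2)\<^sup>2 \<le> r\<^sup>2"
    by (metis abs_le_square_iff abs_of_nonneg q_def zero_le_divide_iff abs_ge_zero zero_le_numeral)
  moreover have "(z - fst p)\<^sup>2 + (2 * z - of_int m - x)\<^sup>2 - r\<^sup>2 / 5 = 5 * (z - fst p + 2 * r / 5)\<^sup>2"
    unfolding r_def by (simp add: power2_eq_square field_simps)
  moreover have "0 \<le> (z - fst p + 2 * r / 5)\<^sup>2" "(q / 2)\<^sup>2 = (2 * y\<^sub>0 - of_int m - x)\<^sup>2 / 4"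
    unfolding q_def by (simp_all add: power_divide)
  ultimately have "(2 * y\<^sub>0 - of_int m - x)\<^sup>2 / 20 \<le> (z - fst p)\<^sup>2 + (2 * z - of_int m - x)\<^sup>2"
    by linarith
  then show ?thesis
    unfolding Re_phase by simp
qed

lemma rapidly_decreasing_phase_integral_off_graph:
  assumes "smooth_fun \<tau>" "2 * y\<^sub>0 - of_int m - x \<noteq> 0"
  shows "rapidly_decreasing_near
           (\<lambda>p h. integral {y\<^sub>0 - 1 / 2..y\<^sub>0 + 1 / 2} (\<lambda>z. exp (phase \<tau> x \<xi> m p z / complex_of_real h)))
           (y\<^sub>0, \<eta>\<^sub>0)"
proof -
  define c where "c = (2 * y\<^sub>0 - of_int m - x)\<^sup>2 / 80"
  define e where "e = \<bar>2 * y\<^sub>0 - of_int m - x\<bar> / 4"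
  show ?thesis
  proof (rule rapidly_decreasing_near_exp[of c e _ _ 1])
    fix p and h :: real
    assume p: "p \<in> ball (y\<^sub>0, \<eta>\<^sub>0) e" and h: "0 < h" "h \<le> 1"
    have "norm (exp (phase \<tau> x \<xi> m p z / complex_of_real h)) \<le> exp (- c / h)" for z
      using divide_right_mono[OF Re_phase_le_off_graph[OF abs_diff_less_if_mem_ball_pair(1)[OF p[unfolded e_def]]], of h] h
      unfolding c_def by (simp add: norm_exp_phase_div)
    then have "norm (integral {y\<^sub>0 - 1 / 2..y\<^sub>0 + 1 / 2} (\<lambda>z. exp (phase \<tau> x \<xi> m p z / complex_of_real h)))
               \<le> exp (- c / h) * ((y\<^sub>0 + 1 / 2) - (y\<^sub>0 - 1 / 2))"
      using h by (intro integral_bound continuous_on_exp_phase[OF assms(1)]) auto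
    then show "norm (integral {y\<^sub>0 - 1 / 2..y\<^sub>0 + 1 / 2} (\<lambda>z. exp (phase \<tau> x \<xi> m p z / complex_of_real h)))
               \<le> 1 * exp (- c / h)"
      by simp
  qed (use assms(2) in \<open>auto simp: c_def e_def\<close>)
qed

lemma Im_phase_deriv: "Im (phase_deriv \<tau> x \<xi> m p z) = 2 * \<xi> + deriv \<tau> z - snd p"
  unfolding phase_deriv_def by simp

lemma abs_Re_phase_deriv_ge:
  assumes "2 * y\<^sub>0 - of_int m - x = 0" "\<bar>fst p - y\<^sub>0\<bar> < \<rho>" "2 * \<rho> \<le> \<bar>z - y\<^sub>0\<bar>"
  shows "2 * \<rho> \<le> \<bar>Re (phase_deriv \<tau> x \<xi> m p z)\<bar>"
proof -
  have "Re (phase_deriv \<tau> x \<xi> m p z) = - (5 * (z - y\<^sub>0) - (fst p - y\<^sub>0)) / 2"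
    using assms(1) unfolding phase_deriv_def by (simp add: field_simps)
  with assms(2,3) show ?thesis
    by (simp add: abs_if split: if_splits)
qed

lemma phase_deriv_bounded_below:
  assumes "smooth_fun \<tau>" "2 * y\<^sub>0 - of_int m - x = 0" "\<eta>\<^sub>0 \<noteq> 2 * \<xi> + deriv \<tau> y\<^sub>0"
  obtains e c where "0 < e" "e \<le> 1 / 8" "0 < c"
    "\<And>p z. p \<in> ball (y\<^sub>0, \<eta>\<^sub>0) e \<Longrightarrow> c \<le> norm (phase_deriv \<tau> x \<xi> m p z)"
proof -
  define A where "A = \<bar>2 * \<xi> + deriv \<tau> y\<^sub>0 - \<eta>\<^sub>0\<bar>"
  have "A > 0"
    using assms(3) unfolding A_def by simp
  have "isCont (deriv \<tau>) y\<^sub>0"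
    using DERIV_isCont[OF smooth_fun_higher_deriv[OF assms(1), of 1 y\<^sub>0]] by simp
  then obtain s where "s > 0" and s: "\<And>w. \<bar>w - y\<^sub>0\<bar> < s \<Longrightarrow> \<bar>deriv \<tau> w - deriv \<tau> y\<^sub>0\<bar> < A / 4"
    using \<open>A > 0\<close> unfolding continuous_at_eps_delta dist_real_def
    by (metis zero_less_divide_iff zero_less_numeral)
  define \<rho> where "\<rho> = min (s / 2) (1 / 8)"
  define e where "e = min \<rho> (A / 4)"
  define c where "c = min (A / 2) (2 * \<rho>)"
  have "\<rho> > 0" "e > 0" "c > 0"
    unfolding \<rho>_def e_def c_def using \<open>s > 0\<close> \<open>A > 0\<close> by auto
  moreover have "e \<le> 1 / 8"
    unfolding e_def \<rho>_def by simp
  moreover have "c \<le> norm (phase_deriv \<tau> x \<xi> m p z)" if p: "p \<in> ball (y\<^sub>0, \<eta>\<^sub>0) e" for p z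
  proof (cases "\<bar>z - y\<^sub>0\<bar> < 2 * \<rho>")
    \<comment> \<open>near \<open>y\<^sub>0\<close> the frequency mismatch keeps the imaginary part away from \<open>0\<close>\<close>
    case True
    then have "\<bar>deriv \<tau> z - deriv \<tau> y\<^sub>0\<bar> < A / 4"
      using s \<rho>_def by auto
    moreover have "\<bar>snd p - \<eta>\<^sub>0\<bar> < A / 4"
      using abs_diff_less_if_mem_ball_pair(2)[OF p] unfolding e_def by linarith
    moreover have "A / 2 \<le> \<bar>v\<bar>" if "\<bar>a\<bar> < A / 4" "\<bar>b\<bar> < A / 4" "A = \<bar>v - a + b\<bar>" for a b v :: real
      using that by linarith
    moreover have "A = \<bar>(2 * \<xi> + deriv \<tau> z - snd p) - (deriv \<tau> z - deriv \<tau> y\<^sub>0) + (snd p - \<eta>\<^sub>0)\<bar>"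
      unfolding A_def by (simp add: algebra_simps)
    ultimately have "A / 2 \<le> \<bar>Im (phase_deriv \<tau> x \<xi> m p z)\<bar>"
      unfolding Im_phase_deriv by blast
    then show ?thesis
      using abs_Im_le_cmod[of "phase_deriv \<tau> x \<xi> m p z"] unfolding c_def by linarith
  next
    \<comment> \<open>away from \<open>y\<^sub>0\<close> the Gaussian factors keep the real part away from \<open>0\<close>\<close>
    case False
    have "\<bar>fst p - y\<^sub>0\<bar> < \<rho>"
      using abs_diff_less_if_mem_ball_pair(1)[OF p] unfolding e_def by linarith
    with False have "2 * \<rho> \<le> \<bar>Re (phase_deriv \<tau> x \<xi> m p z)\<bar>"
      by (intro abs_Re_phase_deriv_ge[OF assms(2)]) auto
    then show ?thesis
      using abs_Re_le_cmod[of "phase_deriv \<tau> x \<xi> m p z"] unfolding c_def by linarith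
  qed
  ultimately show ?thesis
    using that by blast
qed

lemma Re_phase_at_window_end:
  assumes "\<bar>fst p - y\<^sub>0\<bar> < 1 / 8" "\<bar>w - y\<^sub>0\<bar> = 1 / 2"
  shows "Re (phase \<tau> x \<xi> m p w) \<le> - (9 / 256)"
proof -
  have "3 / 8 \<le> \<bar>w - fst p\<bar>"
    using assms by linarith
  then have "(3 / 8)\<^sup>2 \<le> (w - fst p)\<^sup>2"
    by (metis abs_le_square_iff abs_of_nonneg zero_le_divide_iff zero_le_numeral)
  then have "9 / 64 \<le> (w - fst p)\<^sup>2"
    by (simp add: power_divide)
  moreover have "- (X + Y) / 4 \<le> - (9 / 256)" if "9 / 64 \<le> X" "0 \<le> Y" for X Y :: real
    using that by (simp add: field_simps)
  ultimately show ?thesis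
    unfolding Re_phase using zero_le_power2 by blast
qed

lemma rapidly_decreasing_phase_integral_nonstationary:
  assumes "smooth_fun \<tau>" "2 * y\<^sub>0 - of_int m - x = 0" "\<eta>\<^sub>0 \<noteq> 2 * \<xi> + deriv \<tau> y\<^sub>0"
  shows "rapidly_decreasing_near
           (\<lambda>p h. integral {y\<^sub>0 - 1 / 2..y\<^sub>0 + 1 / 2} (\<lambda>z. exp (phase \<tau> x \<xi> m p z / complex_of_real h)))
           (y\<^sub>0, \<eta>\<^sub>0)"
proof -
  obtain e c where "0 < e" "e \<le> 1 / 8" "0 < c"
    and c: "\<And>p z. p \<in> ball (y\<^sub>0, \<eta>\<^sub>0) e \<Longrightarrow> c \<le> norm (phase_deriv \<tau> x \<xi> m p z)"
    using phase_deriv_bounded_below[OF assms] by blast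
  have Re_ends: "Re (phase \<tau> x \<xi> m p w) \<le> - (9 / 256)"
    if "p \<in> ball (y\<^sub>0, \<eta>\<^sub>0) e" "\<bar>w - y\<^sub>0\<bar> = 1 / 2" for p w
    using abs_diff_less_if_mem_ball_pair(1)[OF that(1)] \<open>e \<le> 1 / 8\<close> that(2)
    by (intro Re_phase_at_window_end) auto
  have "nonstationary_phase (y\<^sub>0 - 1 / 2) (y\<^sub>0 + 1 / 2) c (9 / 256) (ball (y\<^sub>0, \<eta>\<^sub>0) e)
          (phase \<tau> x \<xi> m) (phase_deriv \<tau> x \<xi> m)"
  proof
    show "bounded_Cn_family n (ball (y\<^sub>0, \<eta>\<^sub>0) e) {y\<^sub>0 - 1 / 2..y\<^sub>0 + 1 / 2} (phase_deriv \<tau> x \<xi> m)" for n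
      by (rule bounded_Cn_family_phase_deriv[OF assms(1) bounded_ball])
    show "Re (phase \<tau> x \<xi> m p z) \<le> 0" for p z
      unfolding Re_phase by (simp add: add_nonneg_nonneg)
  qed (use \<open>0 < c\<close> c Re_ends has_vector_derivative_phase[OF assms(1)] in auto)
  moreover have "bounded_Cn_family N (ball (y\<^sub>0, \<eta>\<^sub>0) e) {y\<^sub>0 - 1 / 2..y\<^sub>0 + 1 / 2} (\<lambda>p z. 1)" for N
    by (rule bounded_Cn_family_const) (rule bounded_subset[of "{1}"], auto)
  ultimately have bound: "\<exists>C. \<forall>p\<in>ball (y\<^sub>0, \<eta>\<^sub>0) e. \<forall>h>0.
      norm (integral {y\<^sub>0 - 1 / 2..y\<^sub>0 + 1 / 2} (\<lambda>z. 1 * exp (phase \<tau> x \<xi> m p z / of_real h))) \<le> C * h ^ N" for N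
    by (rule nonstationary_phase.integral_bound)
  show ?thesis
  proof (rule rapidly_decreasing_nearI[OF \<open>e > 0\<close>])
    fix N
    from bound[of N] obtain C where "\<forall>p\<in>ball (y\<^sub>0, \<eta>\<^sub>0) e. \<forall>h>0.
        norm (integral {y\<^sub>0 - 1 / 2..y\<^sub>0 + 1 / 2} (\<lambda>z. exp (phase \<tau> x \<xi> m p z / of_real h))) \<le> C * h ^ N"
      by auto
    then show "\<exists>C. \<forall>p\<in>ball (y\<^sub>0, \<eta>\<^sub>0) e. \<forall>h. 0 < h \<and> h \<le> 1 \<longrightarrow>
        norm (integral {y\<^sub>0 - 1 / 2..y\<^sub>0 + 1 / 2} (\<lambda>z. exp (phase \<tau> x \<xi> m p z / of_real h))) \<le> C * h ^ N"
      by (intro exI[of _ C]) auto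
  qed
qed

lemma rapidly_decreasing_phase_integral:
  assumes "smooth_fun \<tau>" "x \<in> {0..<1}" "y\<^sub>0 \<in> {0..<1}"
    and "(y\<^sub>0, \<eta>\<^sub>0) \<notin> {(x / 2, 2 * \<xi> + deriv \<tau> (x / 2)), (x / 2 + 1 / 2, 2 * \<xi> + deriv \<tau> (x / 2 + 1 / 2))}"
  shows "rapidly_decreasing_near
           (\<lambda>p h. integral {y\<^sub>0 - 1 / 2..y\<^sub>0 + 1 / 2} (\<lambda>z. exp (phase \<tau> x \<xi> m p z / complex_of_real h)))
           (y\<^sub>0, \<eta>\<^sub>0)"
proof (cases "2 * y\<^sub>0 - of_int m - x = 0")
  case True
  then have "(- 1 :: real) < of_int m" "of_int m < (2 :: real)"
    using assms(2,3) by auto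
  then have "m = 0 \<or> m = 1"
    by linarith
  then have "y\<^sub>0 = x / 2 \<or> y\<^sub>0 = x / 2 + 1 / 2"
    using True by (auto simp: field_simps)
  then have "\<eta>\<^sub>0 \<noteq> 2 * \<xi> + deriv \<tau> y\<^sub>0"
    using assms(4) by auto
  then show ?thesis
    by (rule rapidly_decreasing_phase_integral_nonstationary[OF assms(1) True])
next
  case False
  then show ?thesis
    by (rule rapidly_decreasing_phase_integral_off_graph[OF assms(1)])
qed

section \<open>Matrix coefficients of the transfer operator\<close>

definition Fhat_inner_density :: "(real \<Rightarrow> real) \<Rightarrow> real \<Rightarrow> real \<Rightarrow> real \<Rightarrow> real \<Rightarrow> real \<Rightarrow> real \<Rightarrow> complex" where
  "Fhat_inner_density \<tau> x \<xi> h y \<eta> z =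
     cnj (wavepacket h y \<eta> z) * (wavepacket h x \<xi> (2 * z) * exp (\<i> * complex_of_real (1 / h * \<tau> z)))"

lemma l2_inner_Fhat_wavepacket:
  "l2_inner (wavepacket h y \<eta>) (Fhat \<tau> (1 / h) (wavepacket h x \<xi>))
     = integral {0..1} (Fhat_inner_density \<tau> x \<xi> h y \<eta>)"
  unfolding l2_inner_def Fhat_def doubling_def wavepacket_frac Fhat_inner_density_def ..

lemma Fhat_inner_density_periodic:
  assumes "\<forall>z. \<tau> (z + 1) = \<tau> z"
  shows "Fhat_inner_density \<tau> x \<xi> h y \<eta> (z + 1) = Fhat_inner_density \<tau> x \<xi> h y \<eta> z"
proof -
  have "2 * (z + 1) = 2 * z + of_int 2"
    by simp
  then show ?thesis
    unfolding Fhat_inner_density_def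
    using wavepacket_shift_int[of h y \<eta> z 1] wavepacket_shift_int[of h x \<xi> "2 * z" 2] assms
    by (metis of_int_1)
qed

lemma norm_cnj_mult_diff_le:
  fixes A A\<^sub>0 B B\<^sub>0 E :: complex
  assumes "norm E = 1"
  shows "norm (cnj A * (B * E) - cnj A\<^sub>0 * (B\<^sub>0 * E)) \<le> norm (A - A\<^sub>0) * norm B + norm A\<^sub>0 * norm (B - B\<^sub>0)"
proof -
  have "cnj A * (B * E) - cnj A\<^sub>0 * (B\<^sub>0 * E) = (cnj A - cnj A\<^sub>0) * B * E + cnj A\<^sub>0 * (B - B\<^sub>0) * E"
    by (simp add: algebra_simps)
  then show ?thesis
    using norm_triangle_ineq[of "(cnj A - cnj A\<^sub>0) * B * E" "cnj A\<^sub>0 * (B - B\<^sub>0) * E"] assms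
    by (simp add: norm_mult complex_cnj_diff [symmetric] del: complex_cnj_diff)
qed

lemma Fhat_inner_density_approx:
  assumes h: "0 < h" "h \<le> 1" and z: "\<bar>z - y\<^sub>0\<bar> \<le> 1 / 2" and y: "\<bar>y - y\<^sub>0\<bar> < 1 / 8"
  defines "K \<equiv> gauss_lattice_const"
  shows "norm (Fhat_inner_density \<tau> x \<xi> h y \<eta> z
             - (\<Sum>m\<in>{\<lfloor>2 * y\<^sub>0 - x\<rfloor> - 2..\<lfloor>2 * y\<^sub>0 - x\<rfloor> + 2}. exp (phase \<tau> x \<xi> m (y, \<eta>) z / complex_of_real h)))
           \<le> (K * K + K) * exp (- (9 / 512) / h)"
proof -
  define A\<^sub>0 where "A\<^sub>0 = gauss_term h y \<eta> 0 z"
  define B\<^sub>0 where "B\<^sub>0 = (\<Sum>m\<in>{\<lfloor>2 * y\<^sub>0 - x\<rfloor> - 2..\<lfloor>2 * y\<^sub>0 - x\<rfloor> + 2}. gauss_term h x \<xi> m (2 * z))"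
  define E where "E = exp (\<i> * complex_of_real (1 / h * \<tau> z))"
  define \<epsilon> where "\<epsilon> = exp (- (9 / 512) / h)"
  have "K > 0"
    unfolding K_def by (rule gauss_lattice_const_pos)
  have "\<bar>z - y\<bar> \<le> \<bar>z - y\<^sub>0\<bar> + \<bar>y - y\<^sub>0\<bar>"
    using abs_triangle_ineq4[of "z - y\<^sub>0" "y - y\<^sub>0"] by simp
  then have "\<bar>z - y\<bar> \<le> 5 / 8"
    using z y by linarith
  then have A: "norm (wavepacket h y \<eta> z - A\<^sub>0) \<le> K * \<epsilon>"
    unfolding A\<^sub>0_def K_def \<epsilon>_def by (rule wavepacket_approx_center[OF h])
  have "2 * z - x - (2 * y\<^sub>0 - x) = 2 * (z - y\<^sub>0)"
    by simp
  then have "\<bar>2 * z - x - (2 * y\<^sub>0 - x)\<bar> = 2 * \<bar>z - y\<^sub>0\<bar>"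
    by (simp only: abs_mult abs_numeral)
  then have "norm (wavepacket h x \<xi> (2 * z) - B\<^sub>0) \<le> K * exp (- 1 / (8 * h))"
    unfolding B\<^sub>0_def K_def using z by (intro wavepacket_approx_window[OF h]) simp
  also have "\<dots> \<le> K * \<epsilon>"
    unfolding \<epsilon>_def using h \<open>K > 0\<close> by (simp add: field_simps)
  finally have B: "norm (wavepacket h x \<xi> (2 * z) - B\<^sub>0) \<le> K * \<epsilon>" .
  have "(\<Sum>m\<in>{\<lfloor>2 * y\<^sub>0 - x\<rfloor> - 2..\<lfloor>2 * y\<^sub>0 - x\<rfloor> + 2}. exp (phase \<tau> x \<xi> m (y, \<eta>) z / complex_of_real h))
          = cnj A\<^sub>0 * (B\<^sub>0 * E)"
    unfolding A\<^sub>0_def B\<^sub>0_def E_def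
    by (simp add: gauss_term_product_eq_exp_phase[OF h(1), symmetric] sum_distrib_left sum_distrib_right)
  then have "norm (Fhat_inner_density \<tau> x \<xi> h y \<eta> z
             - (\<Sum>m\<in>{\<lfloor>2 * y\<^sub>0 - x\<rfloor> - 2..\<lfloor>2 * y\<^sub>0 - x\<rfloor> + 2}. exp (phase \<tau> x \<xi> m (y, \<eta>) z / complex_of_real h)))
      \<le> norm (wavepacket h y \<eta> z - A\<^sub>0) * norm (wavepacket h x \<xi> (2 * z)) + norm A\<^sub>0 * norm (wavepacket h x \<xi> (2 * z) - B\<^sub>0)"
    unfolding Fhat_inner_density_def by (simp add: norm_cnj_mult_diff_le E_def)
  also have "\<dots> \<le> (K * \<epsilon>) * K + 1 * (K * \<epsilon>)"
  proof (intro add_mono mult_mono)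
    show "norm (wavepacket h x \<xi> (2 * z)) \<le> K"
      unfolding K_def by (rule norm_wavepacket_le[OF h])
    show "norm A\<^sub>0 \<le> 1"
      unfolding A\<^sub>0_def norm_gauss_term using h by simp
  qed (use A B \<open>K > 0\<close> in \<open>auto simp: \<epsilon>_def\<close>)
  finally show ?thesis
    unfolding \<epsilon>_def by (simp add: algebra_simps)
qed

lemma norm_l2_inner_Fhat_wavepacket_le:
  assumes "smooth_fun \<tau>" "\<forall>z. \<tau> (z + 1) = \<tau> z" "y\<^sub>0 \<in> {0..<1}" "\<bar>y - y\<^sub>0\<bar> < 1 / 8" "0 < h" "h \<le> 1"
  defines "K \<equiv> gauss_lattice_const"
  shows "norm (l2_inner (wavepacket h y \<eta>) (Fhat \<tau> (1 / h) (wavepacket h x \<xi>)))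
           \<le> norm (\<Sum>m\<in>{\<lfloor>2 * y\<^sub>0 - x\<rfloor> - 2..\<lfloor>2 * y\<^sub>0 - x\<rfloor> + 2}.
                    integral {y\<^sub>0 - 1 / 2..y\<^sub>0 + 1 / 2} (\<lambda>z. exp (phase \<tau> x \<xi> m (y, \<eta>) z / complex_of_real h)))
             + (K * K + K) * exp (- (9 / 512) / h)"
proof -
  define M where "M = {\<lfloor>2 * y\<^sub>0 - x\<rfloor> - 2..\<lfloor>2 * y\<^sub>0 - x\<rfloor> + 2}"
  define \<Phi> where "\<Phi> m z = exp (phase \<tau> x \<xi> m (y, \<eta>) z / complex_of_real h)" for m z
  have W: "{y\<^sub>0 - 1 / 2..y\<^sub>0 + 1 / 2} = {y\<^sub>0 - 1 / 2..y\<^sub>0 - 1 / 2 + 1}"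
    by simp
  have int: "\<Phi> m integrable_on {y\<^sub>0 - 1 / 2..y\<^sub>0 - 1 / 2 + 1}" for m
    unfolding \<Phi>_def using assms(5) by (intro integrable_continuous_interval continuous_on_exp_phase assms(1)) auto
  have "norm (integral {0..1} (Fhat_inner_density \<tau> x \<xi> h y \<eta>))
      \<le> norm (integral {y\<^sub>0 - 1 / 2..y\<^sub>0 - 1 / 2 + 1} (\<lambda>z. \<Sum>m\<in>M. \<Phi> m z)) + (K * K + K) * exp (- (9 / 512) / h)"
  proof (rule norm_integral_periodic_le)
    show "(\<lambda>z. \<Sum>m\<in>M. \<Phi> m z) integrable_on {y\<^sub>0 - 1 / 2..y\<^sub>0 - 1 / 2 + 1}"
      using int unfolding M_def by (intro integrable_sum) auto
    show "norm (Fhat_inner_density \<tau> x \<xi> h y \<eta> z - (\<Sum>m\<in>M. \<Phi> m z)) \<le> (K * K + K) * exp (- (9 / 512) / h)"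
      if "z \<in> {y\<^sub>0 - 1 / 2..y\<^sub>0 - 1 / 2 + 1}" for z
    proof -
      have "\<bar>z - y\<^sub>0\<bar> \<le> 1 / 2"
        unfolding abs_le_iff using that by simp
      from Fhat_inner_density_approx[OF assms(5,6) this assms(4)]
      show ?thesis
        unfolding K_def M_def \<Phi>_def .
    qed
  qed (use Fhat_inner_density_periodic[OF assms(2)] assms(3) in auto)
  also have "integral {y\<^sub>0 - 1 / 2..y\<^sub>0 - 1 / 2 + 1} (\<lambda>z. \<Sum>m\<in>M. \<Phi> m z)
      = (\<Sum>m\<in>M. integral {y\<^sub>0 - 1 / 2..y\<^sub>0 - 1 / 2 + 1} (\<Phi> m))"
    using int by (intro integral_sum) (auto simp: M_def)
  finally show ?thesis
    unfolding l2_inner_Fhat_wavepacket M_def \<Phi>_def W [symmetric] .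
qed

lemma microlocally_small_Fhat_wavepacket:
  assumes "smooth_fun \<tau>" "\<forall>z. \<tau> (z + 1) = \<tau> z" "x \<in> {0..<1}" "y\<^sub>0 \<in> {0..<1}"
    and "(y\<^sub>0, \<eta>\<^sub>0) \<notin> {(x / 2, 2 * \<xi> + deriv \<tau> (x / 2)), (x / 2 + 1 / 2, 2 * \<xi> + deriv \<tau> (x / 2 + 1 / 2))}"
  shows "microlocally_small (\<lambda>h. Fhat \<tau> (1 / h) (wavepacket h x \<xi>)) y\<^sub>0 \<eta>\<^sub>0"
proof -
  define K where "K = gauss_lattice_const * gauss_lattice_const + gauss_lattice_const"
  have "K > 0"
    unfolding K_def using gauss_lattice_const_pos by (simp add: add_pos_pos)
  have main_terms: "rapidly_decreasing_near (\<lambda>p h. \<Sum>m\<in>{\<lfloor>2 * y\<^sub>0 - x\<rfloor> - 2..\<lfloor>2 * y\<^sub>0 - x\<rfloor> + 2}.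
      integral {y\<^sub>0 - 1 / 2..y\<^sub>0 + 1 / 2} (\<lambda>z. exp (phase \<tau> x \<xi> m p z / complex_of_real h))) (y\<^sub>0, \<eta>\<^sub>0)"
    using rapidly_decreasing_phase_integral[OF assms(1,3-5)] by (intro rapidly_decreasing_near_sum) simp_all
  have remainder: "rapidly_decreasing_near (\<lambda>p h. complex_of_real (K * exp (- (9 / 512) / h))) (y\<^sub>0, \<eta>\<^sub>0)"
    by (rule rapidly_decreasing_near_exp[where K = K and e = 1 and c = "9 / 512"])
       (use \<open>K > 0\<close> in \<open>auto simp: norm_mult\<close>)
  have "norm (l2_inner (wavepacket h (fst p) (snd p)) (Fhat \<tau> (1 / h) (wavepacket h x \<xi>)))
      \<le> norm (\<Sum>m\<in>{\<lfloor>2 * y\<^sub>0 - x\<rfloor> - 2..\<lfloor>2 * y\<^sub>0 - x\<rfloor> + 2}.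
                integral {y\<^sub>0 - 1 / 2..y\<^sub>0 + 1 / 2} (\<lambda>z. exp (phase \<tau> x \<xi> m p z / complex_of_real h)))
        + norm (complex_of_real (K * exp (- (9 / 512) / h)))"
    if "p \<in> ball (y\<^sub>0, \<eta>\<^sub>0) (1 / 8)" "0 < h" "h \<le> 1" for p h
  proof -
    have "norm (l2_inner (wavepacket h (fst p) (snd p)) (Fhat \<tau> (1 / h) (wavepacket h x \<xi>)))
        \<le> norm (\<Sum>m\<in>{\<lfloor>2 * y\<^sub>0 - x\<rfloor> - 2..\<lfloor>2 * y\<^sub>0 - x\<rfloor> + 2}.
                  integral {y\<^sub>0 - 1 / 2..y\<^sub>0 + 1 / 2} (\<lambda>z. exp (phase \<tau> x \<xi> m p z / complex_of_real h)))
          + K * exp (- (9 / 512) / h)"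
      using norm_l2_inner_Fhat_wavepacket_le[OF assms(1,2,4) abs_diff_less_if_mem_ball_pair(1)[OF that(1)]
          that(2,3), where \<eta> = "snd p"]
      unfolding K_def by simp
    also have "K * exp (- (9 / 512) / h) = norm (complex_of_real (K * exp (- (9 / 512) / h)))"
      using \<open>K > 0\<close> by (simp add: norm_mult)
    finally show ?thesis .
  qed
  from rapidly_decreasing_near_dominated[OF main_terms remainder _ this, of "1 / 8"]
  show ?thesis
    by (intro microlocally_small_if_rapidly_decreasing_near) simp
qed

theorem mainTheorem2:
  fixes \<tau> :: "real \<Rightarrow> real" and x \<xi> :: real
  assumes "smooth_fun \<tau>"
    and "\<forall>z. \<tau> (z + 1) = \<tau> z"
    and "x \<in> {0..<1}"
  shows "microsupport (\<lambda>h. Fhat \<tau> (1 / h) (wavepacket h x \<xi>))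
           \<subseteq> {(x / 2, 2 * \<xi> + deriv \<tau> (x / 2)),
               (x / 2 + 1 / 2, 2 * \<xi> + deriv \<tau> (x / 2 + 1 / 2))}"
proof
  fix p
  assume p: "p \<in> microsupport (\<lambda>h. Fhat \<tau> (1 / h) (wavepacket h x \<xi>))"
  obtain y\<^sub>0 \<eta>\<^sub>0 where p_eq: "p = (y\<^sub>0, \<eta>\<^sub>0)"
    by (cases p)
  with p have "y\<^sub>0 \<in> {0..<1}" "\<not> microlocally_small (\<lambda>h. Fhat \<tau> (1 / h) (wavepacket h x \<xi>)) y\<^sub>0 \<eta>\<^sub>0"
    unfolding microsupport_def by auto
  then show "p \<in> {(x / 2, 2 * \<xi> + deriv \<tau> (x / 2)), (x / 2 + 1 / 2, 2 * \<xi> + deriv \<tau> (x / 2 + 1 / 2))}"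
    using microlocally_small_Fhat_wavepacket[OF assms] unfolding p_eq by blast
qed

end
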